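(* For $b\in\mathbb R$ let $\mathfrak g_b$ be the 4-dimensional Lie algebra with basis $\{f_1,f_2,u,v\}$ whose only nonzero brackets are $[f_1,f_2]=f_2$, $[f_1,u]=-\tfrac12u+bv$, $[f_1,v]=-bu-\tfrac12v$, and let $G_b$ be the simply connected Lie group with Lie algebra $\mathfrak g_b$. Let $\Sigma$ be the set of pairs $(m,n)\in\mathbb Z\times\mathbb Z$ such that $f_{m,n}(x)=x^3-mx^2+nx-1$ has one real root $c$ and two non-real complex conjugate roots $\alpha,\bar\alpha$, and let $\Sigma'=\Sigma\setminus\{(0,0),(1,1),(2,2)\}$. For $(m,n)\in\Sigma'$ write the non-real root with positive imaginary part as $\alpha=|\alpha|e^{i\phi}$ with $\phi\in(0,\pi)$, and for $k\in\mathbb Z$ define $h_k:\Sigma'\to\mathbb R$ by $h_k(m,n)=\frac{\phi+2k\pi}{\log c}$. Then $G_b$ admits a lattice if and only if $b\in\bigcup_{k\in\mathbb Z}\operatorname{Im}(h_k)$, which is a countable subset of $\mathbb R$.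
   Context: A lattice in a Lie group $G$ is a discrete subgroup $\Gamma$ with $\Gamma\backslash G$ compact. For $(m,n)\in\Sigma'$ the real root $c$ satisfies $c>0$ and $c\neq1$, so $h_k$ is well defined. *)

theory Defs
  imports "HOL-Analysis.Analysis"
begin

text \<open>Concrete model of the simply connected Lie group G_b = R \<ltimes> R^3.
  An element (t, x, w) corresponds to exp(t f1) * exp(x f2 + a u + c v) with w = a + i c.
  Since ad f1 acts on the abelian ideal span(f2,u,v) by f2 |-> f2 and (in the complex
  coordinate w = a + i c of a u + c v) by multiplication with (-1/2 + i b), the group law is
  (t,x,w)(s,y,z) = (t+s, x + e^t y, w + e^(t(-1/2+ib)) z).\<close>

type_synonym Gelem = "real \<times> real \<times> complex"

definition G_mult :: "real \<Rightarrow> Gelem \<Rightarrow> Gelem \<Rightarrow> Gelem" where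
  "G_mult b g h = (case g of (t, x, w) \<Rightarrow> case h of (s, y, z) \<Rightarrow>
     (t + s, x + exp t * y, w + exp (complex_of_real t * Complex (-1/2) b) * z))"

definition G_one :: Gelem where "G_one = (0, 0, 0)"

definition G_inv :: "real \<Rightarrow> Gelem \<Rightarrow> Gelem" where
  "G_inv b g = (case g of (t, x, w) \<Rightarrow>
     (-t, - exp (-t) * x, - exp (complex_of_real (-t) * Complex (-1/2) b) * w))"

definition G_subgroup :: "real \<Rightarrow> Gelem set \<Rightarrow> bool" where
  "G_subgroup b \<Gamma> \<longleftrightarrow> G_one \<in> \<Gamma> \<and>
     (\<forall>g\<in>\<Gamma>. \<forall>h\<in>\<Gamma>. G_mult b g h \<in> \<Gamma>) \<and> (\<forall>g\<in>\<Gamma>. G_inv b g \<in> \<Gamma>)"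

definition G_rcoset :: "real \<Rightarrow> Gelem set \<Rightarrow> Gelem \<Rightarrow> Gelem set" where
  "G_rcoset b \<Gamma> g = (\<lambda>\<gamma>. G_mult b \<gamma> g) ` \<Gamma>"

definition G_lattice :: "real \<Rightarrow> Gelem set \<Rightarrow> bool" where
  "G_lattice b \<Gamma> \<longleftrightarrow> G_subgroup b \<Gamma> \<and> discrete \<Gamma> \<and>
     (\<exists>Q :: Gelem set topology. quotient_map euclidean Q (G_rcoset b \<Gamma>) \<and> compact_space Q)"

definition fmn :: "int \<Rightarrow> int \<Rightarrow> complex \<Rightarrow> complex" where
  "fmn m n x = x^3 - of_int m * x^2 + of_int n * x - 1"

definition Sigma :: "(int \<times> int) set" where
  "Sigma = {(m, n). \<exists>(c::real) (\<alpha>::complex). Im \<alpha> \<noteq> 0 \<and>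
      (\<forall>x. fmn m n x = (x - of_real c) * (x - \<alpha>) * (x - cnj \<alpha>))}"

definition Sigma' :: "(int \<times> int) set" where
  "Sigma' = Sigma - {(0, 0), (1, 1), (2, 2)}"

definition real_root :: "int \<Rightarrow> int \<Rightarrow> real" where
  "real_root m n = (THE c::real. fmn m n (of_real c) = 0)"

definition upper_root :: "int \<Rightarrow> int \<Rightarrow> complex" where
  "upper_root m n = (THE \<alpha>. Im \<alpha> > 0 \<and> fmn m n \<alpha> = 0)"

definition phi_mn :: "int \<Rightarrow> int \<Rightarrow> real" where
  "phi_mn m n = (THE \<phi>. 0 < \<phi> \<and> \<phi> < pi \<and>
     upper_root m n = of_real (cmod (upper_root m n)) * exp (\<i> * of_real \<phi>))"

definition h :: "int \<Rightarrow> int \<times> int \<Rightarrow> real" where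
  "h k mn = (case mn of (m, n) \<Rightarrow> (phi_mn m n + 2 * of_int k * pi) / ln (real_root m n))"

end

theory Submission
  imports Defs
begin

(* If \<Gamma> is a lattice, compactness of \<Gamma>\G yields an element (t, x, w) of \<Gamma> with t \<noteq> 0, and
   commutators with it show that \<Gamma> meets the normal subgroup \<real> \<times> \<complex> = \<real>\<^sup>3 in a lattice.
   Conjugation by (t, x, w) and by its inverse preserves this lattice, so the traces
   m = e^t + 2 Re \<mu> and n = e^(-t) + 2 Re \<mu>\<^sup>-\<^sup>1 of these maps (\<mu> = ad_exp b t) are integers, and
   e^t, \<mu>, cnj \<mu> are the roots of f_{m,n}. A real \<mu> would be a double root, which forces e^t = 1;
   so (m, n) \<in> \<Sigma>', and comparing the arguments of \<mu> gives t b = \<phi> + 2 k \<pi>, i.e. b = h_k(m, n).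

   Conversely, for (m, n) \<in> \<Sigma>' with real root c and upper root \<alpha>, the set of
   (j ln c, p(c), p(\<alpha>)) with j \<in> \<int> and p \<in> \<int>[x] of degree < 3 is a lattice of G_b as soon as
   ad_exp b (ln c) = \<alpha>, and this holds iff b = h_k(m, n) for some k. *)

section \<open>The group \<open>G\<^sub>b\<close>\<close>

(* The action of exp (t f\<^sub>1) on span {u, v}, identified with \<complex> by a u + c v \<mapsto> a + i c. *)
definition ad_exp :: "real \<Rightarrow> real \<Rightarrow> complex" where
  "ad_exp b t = exp (complex_of_real t * Complex (-1/2) b)"

lemma G_mult_simp [simp]: "G_mult b (t, x, w) (s, y, z) = (t + s, x + exp t * y, w + ad_exp b t * z)"
  by (simp add: G_mult_def ad_exp_def)

lemma G_inv_simp [simp]: "G_inv b (t, x, w) = (-t, - exp (-t) * x, - ad_exp b (-t) * w)"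
  by (simp add: G_inv_def ad_exp_def)

lemma ad_exp_add: "ad_exp b (s + t) = ad_exp b s * ad_exp b t"
  by (simp add: ad_exp_def distrib_right exp_add)

lemma ad_exp_0 [simp]: "ad_exp b 0 = 1"
  by (simp add: ad_exp_def)

lemma ad_exp_nonzero [simp]: "ad_exp b t \<noteq> 0"
  by (simp add: ad_exp_def)

lemma ad_exp_minus: "ad_exp b (-t) = inverse (ad_exp b t)"
  using ad_exp_add[of b "-t" t] by (simp add: field_simps)

lemma ad_exp_polar: "ad_exp b t = exp (complex_of_real (-t/2)) * exp (\<i> * complex_of_real (t * b))"
proof -
  have "complex_of_real t * Complex (-1/2) b = complex_of_real (-t/2) + \<i> * complex_of_real (t * b)"
    by (simp add: complex_eq_iff)
  then show ?thesis
    unfolding ad_exp_def by (simp only: exp_add)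
qed

lemma norm_ad_exp: "norm (ad_exp b t) = exp (-t/2)"
  by (simp add: ad_exp_def norm_exp_eq_Re)

lemma norm_ad_exp_squared: "(norm (ad_exp b t))\<^sup>2 = exp (-t)"
  by (simp add: norm_ad_exp power2_eq_square flip: exp_add)

lemma ad_exp_eq_1_iff: "ad_exp b t = 1 \<longleftrightarrow> t = 0"
proof
  assume "ad_exp b t = 1"
  then have "exp (-t/2) = 1"
    using norm_ad_exp[of b t] by simp
  then show "t = 0"
    by simp
qed simp

lemma ad_exp_of_int_mult: "ad_exp b (of_int j * t) = ad_exp b t powi j"
  unfolding ad_exp_def exp_power_int by (simp add: mult.assoc)

lemma ad_exp_eq_iff:
  assumes "norm \<alpha> = exp (-t/2)"
  shows "ad_exp b t = \<alpha> \<longleftrightarrow> (\<exists>k::int. t * b = Arg \<alpha> + 2 * of_int k * pi)"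
proof -
  have "\<alpha> \<noteq> 0"
    using assms by auto
  then have "\<alpha> = exp (complex_of_real (-t/2)) * exp (\<i> * complex_of_real (Arg \<alpha>))"
    using Arg_eq[of \<alpha>] unfolding assms exp_of_real by simp
  then have "ad_exp b t = \<alpha> \<longleftrightarrow>
      ad_exp b t = exp (complex_of_real (-t/2)) * exp (\<i> * complex_of_real (Arg \<alpha>))"
    by (rule arg_cong)
  also have "\<dots> \<longleftrightarrow> exp (\<i> * complex_of_real (t * b)) = exp (\<i> * complex_of_real (Arg \<alpha>))"
    unfolding ad_exp_polar by simp
  also have "\<dots> \<longleftrightarrow> (\<exists>k::int. \<i> * complex_of_real (t * b) = \<i> * complex_of_real (Arg \<alpha>) + of_int (2 * k) * pi * \<i>)"
    by (rule exp_eq)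
  also have "\<dots> \<longleftrightarrow> (\<exists>k::int. t * b = Arg \<alpha> + 2 * of_int k * pi)"
    by (simp add: complex_eq_iff)
  finally show ?thesis .
qed

lemma G_mult_assoc: "G_mult b (G_mult b g1 g2) g3 = G_mult b g1 (G_mult b g2 g3)"
  by (cases g1; cases g2; cases g3) (auto simp: ad_exp_add exp_add algebra_simps)

lemma G_mult_one_left [simp]: "G_mult b G_one g = g"
  by (cases g) (simp add: G_one_def)

lemma G_mult_inv_left: "G_mult b (G_inv b g) g = G_one"
  by (cases g) (simp add: G_one_def ad_exp_minus exp_minus field_simps)

lemma G_conj_normal:
  "G_mult b (G_mult b (t, x, w) (0, y, z)) (G_inv b (t, x, w)) = (0, exp t * y, ad_exp b t * z)"
  by (simp add: ad_exp_minus exp_minus field_simps)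

lemma G_commutator:
  "G_mult b (G_mult b (G_mult b (s, y, z) (t, x, w)) (G_inv b (s, y, z))) (G_inv b (t, x, w))
    = (0, (1 - exp t) * y + (exp s - 1) * x, (1 - ad_exp b t) * z + (ad_exp b s - 1) * w)"
  by (simp add: ad_exp_add ad_exp_minus exp_add exp_minus field_simps)

lemma continuous_on_G_mult: "continuous_on UNIV (G_mult b g)"
proof -
  have "G_mult b g = (\<lambda>g'. (fst g + fst g', fst (snd g) + exp (fst g) * fst (snd g'),
      snd (snd g) + ad_exp b (fst g) * snd (snd g')))"
    by (cases g) auto
  then show ?thesis
    by (simp add: continuous_intros)
qed

lemma
  assumes "G_subgroup b \<Gamma>"
  shows G_subgroup_one: "G_one \<in> \<Gamma>"
    and G_subgroup_mult: "g \<in> \<Gamma> \<Longrightarrow> g' \<in> \<Gamma> \<Longrightarrow> G_mult b g g' \<in> \<Gamma>"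
    and G_subgroup_inv: "g \<in> \<Gamma> \<Longrightarrow> G_inv b g \<in> \<Gamma>"
  using assms unfolding G_subgroup_def by blast+

lemma G_rcoset_eq_iff:
  assumes S: "G_subgroup b \<Gamma>"
  shows "G_rcoset b \<Gamma> g = G_rcoset b \<Gamma> u \<longleftrightarrow> (\<exists>\<gamma>\<in>\<Gamma>. u = G_mult b \<gamma> g)"
proof
  assume "G_rcoset b \<Gamma> g = G_rcoset b \<Gamma> u"
  moreover have "u \<in> G_rcoset b \<Gamma> u"
    unfolding G_rcoset_def using G_subgroup_one[OF S] by (metis G_mult_one_left image_eqI)
  ultimately show "\<exists>\<gamma>\<in>\<Gamma>. u = G_mult b \<gamma> g"
    unfolding G_rcoset_def by auto
next
  assume "\<exists>\<gamma>\<in>\<Gamma>. u = G_mult b \<gamma> g"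
  then obtain \<gamma> where \<gamma>: "\<gamma> \<in> \<Gamma>" "u = G_mult b \<gamma> g"
    by blast
  have "G_mult b \<delta> g = G_mult b (G_mult b \<delta> (G_inv b \<gamma>)) u" for \<delta>
    using \<gamma>(2) by (metis G_mult_assoc G_mult_inv_left G_mult_one_left)
  moreover have "G_mult b \<delta> u = G_mult b (G_mult b \<delta> \<gamma>) g" for \<delta>
    using \<gamma>(2) by (simp add: G_mult_assoc)
  ultimately show "G_rcoset b \<Gamma> g = G_rcoset b \<Gamma> u"
    unfolding G_rcoset_def using S \<gamma>(1)
    by (auto intro!: image_eqI G_subgroup_mult G_subgroup_inv)
qed

lemma quotient_map_exists:
  fixes f :: "'a::topological_space \<Rightarrow> 'b"
  obtains Q where "quotient_map euclidean Q f"
proof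
  define P where "P U \<longleftrightarrow> U \<subseteq> range f \<and> open {x. f x \<in> U}" for U
  have "istopology P"
    unfolding istopology_def P_def
  proof (rule conjI; intro allI impI)
    fix S T assume "S \<subseteq> range f \<and> open {x. f x \<in> S}" "T \<subseteq> range f \<and> open {x. f x \<in> T}"
    moreover have "{x. f x \<in> S \<inter> T} = {x. f x \<in> S} \<inter> {x. f x \<in> T}"
      by auto
    ultimately show "S \<inter> T \<subseteq> range f \<and> open {x. f x \<in> S \<inter> T}"
      by auto
  next
    fix \<K> assume "\<forall>K\<in>\<K>. K \<subseteq> range f \<and> open {x. f x \<in> K}"
    moreover have "{x. f x \<in> \<Union>\<K>} = (\<Union>K\<in>\<K>. {x. f x \<in> K})"
      by auto
    ultimately show "\<Union>\<K> \<subseteq> range f \<and> open {x. f x \<in> \<Union>\<K>}"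
      by auto
  qed
  then have open_Q: "openin (topology P) = P"
    by simp
  have top: "topspace (topology P) = range f"
  proof
    show "topspace (topology P) \<subseteq> range f"
      unfolding topspace_def open_Q P_def by auto
    have "P (range f)"
      unfolding P_def by simp
    then show "range f \<subseteq> topspace (topology P)"
      using open_Q openin_subset by metis
  qed
  show "quotient_map euclidean (topology P) f"
    unfolding quotient_map_def top open_Q P_def by auto
qed

lemma compact_quotient_bounded_section:
  fixes f :: "'a::real_normed_vector \<Rightarrow> 'b"
  assumes qm: "quotient_map euclidean Q f" and compact: "compact_space Q"
    and saturation_open: "\<And>U. open U \<Longrightarrow> open (f -` f ` U)"
  obtains R where "\<And>x. \<exists>y. f y = f x \<and> norm y < R"
proof -
  define U where "U r = f ` ball 0 (real r)" for r :: nat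
  have top: "topspace Q = range f"
    using qm unfolding quotient_map_def by simp
  have "openin Q (U r)" for r
  proof -
    have "{x \<in> topspace euclidean. f x \<in> U r} = f -` f ` ball 0 (real r)"
      unfolding U_def by auto
    moreover have "open (f -` f ` ball 0 (real r))"
      by (rule saturation_open) simp
    moreover have "U r \<subseteq> topspace Q"
      unfolding top U_def by auto
    ultimately show ?thesis
      using qm unfolding quotient_map_def by auto
  qed
  moreover have "topspace Q \<subseteq> \<Union>(range U)"
  proof
    fix y assume "y \<in> topspace Q"
    then obtain x where x: "y = f x"
      using top by auto
    have "x \<in> ball 0 (real (nat \<lceil>norm x\<rceil> + 1))"
      by simp linarith
    then show "y \<in> \<Union>(range U)"
      unfolding U_def x by blast
  qed
  ultimately obtain \<F> where \<F>: "finite \<F>" "\<F> \<subseteq> range U" "topspace Q \<subseteq> \<Union>\<F>"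
    using compact unfolding compact_space_alt by (metis (no_types, lifting) rangeE)
  then obtain C where C: "finite C" "\<F> = U ` C"
    using finite_subset_image by (metis subset_UNIV)
  show ?thesis
  proof
    fix x
    obtain r where r: "r \<in> C" "f x \<in> U r"
      using \<F>(3) C(2) top by blast
    then obtain y where "y \<in> ball 0 (real r)" "f x = f y"
      unfolding U_def by auto
    moreover have "real r \<le> real (\<Sum>C)"
      using r(1) C(1) by (simp add: member_le_sum)
    ultimately show "\<exists>y. f y = f x \<and> norm y < real (\<Sum>C)"
      by force
  qed
qed

lemma G_lattice_bounded_cover:
  assumes "G_lattice b \<Gamma>"
  obtains R where "\<And>g. \<exists>\<gamma>\<in>\<Gamma>. norm (G_mult b \<gamma> g) < R"
proof -
  have S: "G_subgroup b \<Gamma>"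
    using assms G_lattice_def by blast
  obtain Q where qm: "quotient_map euclidean Q (G_rcoset b \<Gamma>)" and compact: "compact_space Q"
    using assms G_lattice_def by blast
  have saturation_open: "open (G_rcoset b \<Gamma> -` G_rcoset b \<Gamma> ` U)" if "open U" for U
  proof -
    have "x \<in> G_rcoset b \<Gamma> -` G_rcoset b \<Gamma> ` U \<longleftrightarrow> (\<exists>\<gamma>\<in>\<Gamma>. G_mult b \<gamma> x \<in> U)" for x
    proof
      assume "x \<in> G_rcoset b \<Gamma> -` G_rcoset b \<Gamma> ` U"
      then obtain u where "u \<in> U" "G_rcoset b \<Gamma> x = G_rcoset b \<Gamma> u"
        by auto
      then show "\<exists>\<gamma>\<in>\<Gamma>. G_mult b \<gamma> x \<in> U"
        using G_rcoset_eq_iff[OF S] by metis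
    next
      assume "\<exists>\<gamma>\<in>\<Gamma>. G_mult b \<gamma> x \<in> U"
      then obtain \<gamma> where "\<gamma> \<in> \<Gamma>" "G_mult b \<gamma> x \<in> U"
        by blast
      then have "G_rcoset b \<Gamma> x = G_rcoset b \<Gamma> (G_mult b \<gamma> x)"
        using G_rcoset_eq_iff[OF S] by blast
      then show "x \<in> G_rcoset b \<Gamma> -` G_rcoset b \<Gamma> ` U"
        using \<open>G_mult b \<gamma> x \<in> U\<close> by blast
    qed
    then have "G_rcoset b \<Gamma> -` G_rcoset b \<Gamma> ` U = (\<Union>\<gamma>\<in>\<Gamma>. G_mult b \<gamma> -` U)"
      by blast
    then show ?thesis
      using that by (simp add: open_UN open_vimage continuous_on_G_mult)
  qed
  obtain R where "\<And>g. \<exists>y. G_rcoset b \<Gamma> y = G_rcoset b \<Gamma> g \<and> norm y < R"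
    using compact_quotient_bounded_section[OF qm compact saturation_open] by blast
  then show ?thesis
    using that G_rcoset_eq_iff[OF S] by metis
qed

lemma G_lattice_of_compact_cover:
  assumes S: "G_subgroup b \<Gamma>" and "discrete \<Gamma>" and K: "compact K"
    and cover: "\<And>g. \<exists>\<gamma>\<in>\<Gamma>. G_mult b \<gamma> g \<in> K"
  shows "G_lattice b \<Gamma>"
proof -
  obtain Q where qm: "quotient_map euclidean Q (G_rcoset b \<Gamma>)"
    using quotient_map_exists by blast
  have top: "topspace Q = range (G_rcoset b \<Gamma>)"
    using qm by (simp add: quotient_map_def)
  have "G_rcoset b \<Gamma> ` K = topspace Q"
  proof
    show "topspace Q \<subseteq> G_rcoset b \<Gamma> ` K"
    proof
      fix y assume "y \<in> topspace Q"
      then obtain g where y: "y = G_rcoset b \<Gamma> g"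
        unfolding top by blast
      obtain \<gamma> where "\<gamma> \<in> \<Gamma>" "G_mult b \<gamma> g \<in> K"
        using cover by blast
      moreover have "G_rcoset b \<Gamma> (G_mult b \<gamma> g) = y"
        unfolding y using G_rcoset_eq_iff[OF S] \<open>\<gamma> \<in> \<Gamma>\<close> by metis
      ultimately show "y \<in> G_rcoset b \<Gamma> ` K"
        by (metis image_eqI)
    qed
  qed (auto simp: top)
  moreover have "compactin Q (G_rcoset b \<Gamma> ` K)"
    using image_compactin[OF _ quotient_imp_continuous_map[OF qm]] K by simp
  ultimately have "compact_space Q"
    unfolding compact_space_def by simp
  then show ?thesis
    unfolding G_lattice_def using assms qm by blast
qed

section \<open>Lattices in \<open>\<real>\<^sup>3\<close>\<close>

type_synonym R3 = "real \<times> real \<times> real"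

lemma norm_le_norm_triple:
  fixes a :: "'a::real_normed_vector" and b :: "'b::real_normed_vector" and c :: "'c::real_normed_vector"
  shows "norm a \<le> norm (a, b, c)" "norm b \<le> norm (a, b, c)" "norm c \<le> norm (a, b, c)"
  using norm_fst_le[of a "(b, c)"] norm_snd_le[of "(b, c)" a] norm_fst_le[of b c] norm_snd_le[of c b]
  by simp_all

definition det3 :: "R3 \<Rightarrow> R3 \<Rightarrow> R3 \<Rightarrow> real" where
  "det3 u v w = (case (u, v, w) of ((u1, u2, u3), (v1, v2, v3), (w1, w2, w3)) \<Rightarrow>
     u1 * (v2 * w3 - v3 * w2) - u2 * (v1 * w3 - v3 * w1) + u3 * (v1 * w2 - v2 * w1))"

lemma det3_cyclic: "det3 u v w = det3 v w u"
  by (cases u; cases v; cases w) (simp add: det3_def algebra_simps)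

lemma det3_combination:
  "det3 (a1 *\<^sub>R v1 + a2 *\<^sub>R v2 + a3 *\<^sub>R v3) (b1 *\<^sub>R v1 + b2 *\<^sub>R v2 + b3 *\<^sub>R v3)
        (c1 *\<^sub>R v1 + c2 *\<^sub>R v2 + c3 *\<^sub>R v3)
     = det3 (a1, a2, a3) (b1, b2, b3) (c1, c2, c3) * det3 v1 v2 v3"
  by (cases v1; cases v2; cases v3) (simp add: det3_def algebra_simps)

lemma det3_combination_first: "det3 (a1 *\<^sub>R v1 + a2 *\<^sub>R v2 + a3 *\<^sub>R v3) v2 v3 = a1 * det3 v1 v2 v3"
  by (cases v1; cases v2; cases v3) (simp add: det3_def algebra_simps)

lemma det3_diff_scaleR_first: "det3 (x - a *\<^sub>R y) v w = det3 x v w - a * det3 y v w"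
  by (cases x; cases y; cases v; cases w) (simp add: det3_def algebra_simps)

lemma det3_scaleR_all: "det3 (a *\<^sub>R u) (a *\<^sub>R v) (a *\<^sub>R w) = a ^ 3 * det3 u v w"
  by (cases u; cases v; cases w) (simp add: det3_def algebra_simps power3_eq_cube)

lemma det3_Ints:
  assumes "a1 \<in> \<int>" "a2 \<in> \<int>" "a3 \<in> \<int>" "b1 \<in> \<int>" "b2 \<in> \<int>" "b3 \<in> \<int>" "c1 \<in> \<int>" "c2 \<in> \<int>" "c3 \<in> \<int>"
  shows "det3 (a1, a2, a3) (b1, b2, b3) (c1, c2, c3) \<in> \<int>"
  using assms by (simp add: det3_def)

lemma det3_coordinates:
  assumes D: "det3 v1 v2 v3 \<noteq> 0"
  obtains r1 r2 r3 where "x = r1 *\<^sub>R v1 + r2 *\<^sub>R v2 + r3 *\<^sub>R v3"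
proof
  let ?D = "det3 v1 v2 v3"
  have "?D *\<^sub>R x = det3 x v2 v3 *\<^sub>R v1 + det3 v1 x v3 *\<^sub>R v2 + det3 v1 v2 x *\<^sub>R v3"
    by (cases x; cases v1; cases v2; cases v3) (simp add: det3_def algebra_simps)
  also have "\<dots> = ?D *\<^sub>R ((det3 x v2 v3 / ?D) *\<^sub>R v1 + (det3 v1 x v3 / ?D) *\<^sub>R v2
      + (det3 v1 v2 x / ?D) *\<^sub>R v3)"
    using D by (simp add: scaleR_add_right)
  finally show "x = (det3 x v2 v3 / ?D) *\<^sub>R v1 + (det3 v1 x v3 / ?D) *\<^sub>R v2 + (det3 v1 v2 x / ?D) *\<^sub>R v3"
    using D by simp
qed

lemma diagonal_dominance_margin_pos:
  fixes C M :: real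
  assumes C: "C \<ge> 0" and M: "M \<ge> 9 * C + 1"
  shows "M * (M * M - C * C) - 2 * (C * (C * (M + 2 * C) + C * C)) > 0"
proof -
  have "M * M \<ge> (9 * C + 1) * (9 * C + 1)"
    using M C by (intro mult_mono) auto
  then have "M * M - 3 * (C * C) \<ge> 78 * (C * C) + 1"
    using C by (simp add: algebra_simps)
  then have "M * (M * M - 3 * (C * C)) \<ge> (9 * C + 1) * (78 * (C * C) + 1)"
    using M C by (intro mult_mono) auto
  moreover have "(9 * C + 1) * (78 * (C * C) + 1) - 6 * (C * (C * C))
      = 696 * (C * (C * C)) + 78 * (C * C) + 9 * C + 1"
    by (simp add: algebra_simps)
  moreover have "C * (C * C) \<ge> 0" "C * C \<ge> 0"
    using C by auto
  moreover have "M * (M * M - C * C) - 2 * (C * (C * (M + 2 * C) + C * C))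
      = M * (M * M - 3 * (C * C)) - 6 * (C * (C * C))"
    by (simp add: algebra_simps)
  ultimately show ?thesis
    using C by linarith
qed

lemma det3_diagonally_dominant_pos:
  fixes C :: real
  assumes C: "C \<ge> 0" and K: "K = 10 * C + 1"
    and e: "\<bar>e11\<bar> \<le> C" "\<bar>e12\<bar> \<le> C" "\<bar>e13\<bar> \<le> C" "\<bar>e21\<bar> \<le> C" "\<bar>e22\<bar> \<le> C"
      "\<bar>e23\<bar> \<le> C" "\<bar>e31\<bar> \<le> C" "\<bar>e32\<bar> \<le> C" "\<bar>e33\<bar> \<le> C"
  shows "det3 (K + e11, e12, e13) (e21, K + e22, e23) (e31, e32, K + e33) > 0"
proof -
  define M where "M = K - C"
  have M: "M \<ge> 9 * C + 1"
    using K M_def by simp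
  then have M_pos: "M > 0"
    using C by simp
  have a11: "K + e11 \<ge> M"
    using e M_def by (auto simp: abs_le_iff)
  have a22: "K + e22 \<ge> M" "K + e22 \<le> M + 2 * C"
    using e M_def by (auto simp: abs_le_iff)
  have a33: "K + e33 \<ge> M" "K + e33 \<le> M + 2 * C"
    using e M_def by (auto simp: abs_le_iff)
  have prod_le: "\<bar>x * y\<bar> \<le> C * C" if "\<bar>x\<bar> \<le> C" "\<bar>y\<bar> \<le> C" for x y :: real
    using that C unfolding abs_mult by (meson abs_ge_zero mult_mono)
  have "(K + e22) * (K + e33) \<ge> M * M"
    using a22 a33 M C by (intro mult_mono) auto
  then have minor11: "(K + e22) * (K + e33) - e23 * e32 \<ge> M * M - C * C"
    using prod_le[OF e(6) e(8)] by linarith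
  have "M * M - C * C \<ge> 0"
    using M C by (smt (verit) mult_mono)
  then have t1: "(K + e11) * ((K + e22) * (K + e33) - e23 * e32) \<ge> M * (M * M - C * C)"
    using minor11 a11 M_pos by (meson less_eq_real_def mult_mono order_trans)
  have "\<bar>e21 * (K + e33)\<bar> \<le> C * (M + 2 * C)"
    using e C a33 M_pos unfolding abs_mult by (intro mult_mono) auto
  then have "\<bar>e21 * (K + e33) - e23 * e31\<bar> \<le> C * (M + 2 * C) + C * C"
    using prod_le[OF e(6) e(7)] by linarith
  then have t2: "\<bar>e12 * (e21 * (K + e33) - e23 * e31)\<bar> \<le> C * (C * (M + 2 * C) + C * C)"
    using e C unfolding abs_mult by (meson abs_ge_zero mult_mono)
  have "\<bar>(K + e22) * e31\<bar> \<le> (M + 2 * C) * C"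
    using e C a22 M_pos unfolding abs_mult by (intro mult_mono) auto
  then have "\<bar>e21 * e32 - (K + e22) * e31\<bar> \<le> C * C + (M + 2 * C) * C"
    using prod_le[OF e(4) e(8)] by linarith
  then have t3: "\<bar>e13 * (e21 * e32 - (K + e22) * e31)\<bar> \<le> C * (C * C + (M + 2 * C) * C)"
    using e C unfolding abs_mult by (meson abs_ge_zero mult_mono)
  have key: "M * (M * M - C * C) - 2 * (C * (C * (M + 2 * C) + C * C)) > 0"
    using C M by (rule diagonal_dominance_margin_pos)
  have "det3 (K + e11, e12, e13) (e21, K + e22, e23) (e31, e32, K + e33)
     = (K + e11) * ((K + e22) * (K + e33) - e23 * e32) - e12 * (e21 * (K + e33) - e23 * e31)
       + e13 * (e21 * e32 - (K + e22) * e31)"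
    by (simp add: det3_def)
  moreover have "C * (C * C + (M + 2 * C) * C) = C * (C * (M + 2 * C) + C * C)"
    by (simp add: algebra_simps)
  ultimately show ?thesis
    using t1 t2 t3 key by (smt (verit))
qed

lemma det3_near_scaled_basis_pos:
  assumes C: "C \<ge> 0" and K: "K = 10 * C + 1"
    and x: "norm (x - (K, 0, 0)) \<le> C" and y: "norm (y - (0, K, 0)) \<le> C" and z: "norm (z - (0, 0, K)) \<le> C"
  shows "det3 x y z > 0"
proof -
  obtain x1 x2 x3 y1 y2 y3 z1 z2 z3 where xyz: "x = (x1, x2, x3)" "y = (y1, y2, y3)" "z = (z1, z2, z3)"
    by (metis prod.collapse)
  have "\<bar>x1 - K\<bar> \<le> C" "\<bar>x2\<bar> \<le> C" "\<bar>x3\<bar> \<le> C"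
    using x norm_le_norm_triple[where a = "x1 - K" and b = x2 and c = x3] unfolding xyz by auto
  moreover have "\<bar>y1\<bar> \<le> C" "\<bar>y2 - K\<bar> \<le> C" "\<bar>y3\<bar> \<le> C"
    using y norm_le_norm_triple[where a = y1 and b = "y2 - K" and c = y3] unfolding xyz by auto
  moreover have "\<bar>z1\<bar> \<le> C" "\<bar>z2\<bar> \<le> C" "\<bar>z3 - K\<bar> \<le> C"
    using z norm_le_norm_triple[where a = z1 and b = z2 and c = "z3 - K"] unfolding xyz by auto
  ultimately have "det3 (K + (x1 - K), x2, x3) (y1, K + (y2 - K), y3) (z1, z2, K + (z3 - K)) > 0"
    by (intro det3_diagonally_dominant_pos[OF C K])
  then show ?thesis
    unfolding xyz by simp
qed

definition int_span3 :: "R3 \<Rightarrow> R3 \<Rightarrow> R3 \<Rightarrow> R3 set" where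
  "int_span3 v1 v2 v3 = {k1 *\<^sub>R v1 + k2 *\<^sub>R v2 + k3 *\<^sub>R v3 | k1 k2 k3. k1 \<in> \<int> \<and> k2 \<in> \<int> \<and> k3 \<in> \<int>}"

lemma int_span3_memI:
  "k1 \<in> \<int> \<Longrightarrow> k2 \<in> \<int> \<Longrightarrow> k3 \<in> \<int> \<Longrightarrow> k1 *\<^sub>R v1 + k2 *\<^sub>R v2 + k3 *\<^sub>R v3 \<in> int_span3 v1 v2 v3"
  unfolding int_span3_def by blast

lemma int_span3_memE:
  assumes "x \<in> int_span3 v1 v2 v3"
  obtains k1 k2 k3 where "k1 \<in> \<int>" "k2 \<in> \<int>" "k3 \<in> \<int>" "x = k1 *\<^sub>R v1 + k2 *\<^sub>R v2 + k3 *\<^sub>R v3"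
  using assms unfolding int_span3_def by blast

lemma int_span3_generators:
  "v1 \<in> int_span3 v1 v2 v3" "v2 \<in> int_span3 v1 v2 v3" "v3 \<in> int_span3 v1 v2 v3"
  using int_span3_memI[of 1 0 0 v1 v2 v3] int_span3_memI[of 0 1 0 v1 v2 v3] int_span3_memI[of 0 0 1 v1 v2 v3]
  by simp_all

lemma int_span3_diff:
  assumes "x \<in> int_span3 v1 v2 v3" "y \<in> int_span3 v1 v2 v3"
  shows "x - y \<in> int_span3 v1 v2 v3"
proof -
  obtain k1 k2 k3 l1 l2 l3 where kl: "k1 \<in> \<int>" "k2 \<in> \<int>" "k3 \<in> \<int>" "l1 \<in> \<int>" "l2 \<in> \<int>" "l3 \<in> \<int>"
    and "x = k1 *\<^sub>R v1 + k2 *\<^sub>R v2 + k3 *\<^sub>R v3" "y = l1 *\<^sub>R v1 + l2 *\<^sub>R v2 + l3 *\<^sub>R v3"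
    using assms by (elim int_span3_memE)
  then have "x - y = (k1 - l1) *\<^sub>R v1 + (k2 - l2) *\<^sub>R v2 + (k3 - l3) *\<^sub>R v3"
    by (simp add: algebra_simps)
  then show ?thesis
    using kl by (simp add: int_span3_memI)
qed

lemma int_span3_scaleR:
  assumes "x \<in> int_span3 v1 v2 v3" "a \<in> \<int>"
  shows "a *\<^sub>R x \<in> int_span3 v1 v2 v3"
proof -
  obtain k1 k2 k3 where k: "k1 \<in> \<int>" "k2 \<in> \<int>" "k3 \<in> \<int>" and "x = k1 *\<^sub>R v1 + k2 *\<^sub>R v2 + k3 *\<^sub>R v3"
    using assms(1) by (elim int_span3_memE)
  then have "a *\<^sub>R x = (a * k1) *\<^sub>R v1 + (a * k2) *\<^sub>R v2 + (a * k3) *\<^sub>R v3"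
    by (simp add: scaleR_add_right)
  then show ?thesis
    using k assms(2) by (simp add: int_span3_memI)
qed

lemma det3_int_span3:
  assumes "x \<in> int_span3 v1 v2 v3" "y \<in> int_span3 v1 v2 v3" "z \<in> int_span3 v1 v2 v3"
  obtains k where "k \<in> \<int>" "det3 x y z = k * det3 v1 v2 v3"
proof -
  obtain a1 a2 a3 b1 b2 b3 c1 c2 c3 where
    I: "a1 \<in> \<int>" "a2 \<in> \<int>" "a3 \<in> \<int>" "b1 \<in> \<int>" "b2 \<in> \<int>" "b3 \<in> \<int>" "c1 \<in> \<int>" "c2 \<in> \<int>" "c3 \<in> \<int>"
    and "x = a1 *\<^sub>R v1 + a2 *\<^sub>R v2 + a3 *\<^sub>R v3" "y = b1 *\<^sub>R v1 + b2 *\<^sub>R v2 + b3 *\<^sub>R v3"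
      "z = c1 *\<^sub>R v1 + c2 *\<^sub>R v2 + c3 *\<^sub>R v3"
    using assms by (elim int_span3_memE)
  then have "det3 x y z = det3 (a1, a2, a3) (b1, b2, b3) (c1, c2, c3) * det3 v1 v2 v3"
    by (simp only: det3_combination)
  then show ?thesis
    using that det3_Ints[OF I] by blast
qed

lemma int_span3_dense:
  assumes "det3 v1 v2 v3 \<noteq> 0"
  shows "\<exists>y\<in>int_span3 v1 v2 v3. norm (x - y) \<le> norm v1 + norm v2 + norm v3"
proof -
  obtain r1 r2 r3 where r: "x = r1 *\<^sub>R v1 + r2 *\<^sub>R v2 + r3 *\<^sub>R v3"
    using det3_coordinates[OF assms] .
  define y where "y = of_int \<lfloor>r1\<rfloor> *\<^sub>R v1 + of_int \<lfloor>r2\<rfloor> *\<^sub>R v2 + of_int \<lfloor>r3\<rfloor> *\<^sub>R v3"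
  have "y \<in> int_span3 v1 v2 v3"
    unfolding y_def by (simp add: int_span3_memI)
  have xy: "x - y = frac r1 *\<^sub>R v1 + frac r2 *\<^sub>R v2 + frac r3 *\<^sub>R v3"
    unfolding r y_def frac_def by (simp add: algebra_simps)
  have "norm (x - y) \<le> norm (frac r1 *\<^sub>R v1) + norm (frac r2 *\<^sub>R v2) + norm (frac r3 *\<^sub>R v3)"
    using norm_triangle_ineq[of "frac r1 *\<^sub>R v1 + frac r2 *\<^sub>R v2" "frac r3 *\<^sub>R v3"]
      norm_triangle_ineq[of "frac r1 *\<^sub>R v1" "frac r2 *\<^sub>R v2"] unfolding xy by linarith
  also have "\<dots> = frac r1 * norm v1 + frac r2 * norm v2 + frac r3 * norm v3"
    by (simp add: frac_ge_0)
  also have "\<dots> \<le> norm v1 + norm v2 + norm v3"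
    by (intro add_mono mult_left_le_one_le) (auto simp: frac_ge_0 intro: less_imp_le[OF frac_lt_1])
  finally show ?thesis
    using \<open>y \<in> int_span3 v1 v2 v3\<close> by blast
qed

definition diag_mult :: "real \<Rightarrow> complex \<Rightarrow> R3 \<Rightarrow> R3" where
  "diag_mult c \<mu> x = (c * fst x, Re \<mu> * fst (snd x) - Im \<mu> * snd (snd x), Im \<mu> * fst (snd x) + Re \<mu> * snd (snd x))"

lemma det3_trace_diag_mult:
  "det3 (diag_mult c \<mu> u1) u2 u3 + det3 u1 (diag_mult c \<mu> u2) u3 + det3 u1 u2 (diag_mult c \<mu> u3)
     = (c + 2 * Re \<mu>) * det3 u1 u2 u3"
  by (cases u1; cases u2; cases u3) (simp add: det3_def diag_mult_def algebra_simps)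

locale R3_lattice =
  fixes L :: "R3 set"
  assumes zero_mem: "0 \<in> L"
    and add_mem: "x \<in> L \<Longrightarrow> y \<in> L \<Longrightarrow> x + y \<in> L"
    and uminus_mem: "x \<in> L \<Longrightarrow> - x \<in> L"
    and separated: "\<exists>\<epsilon>>0. \<forall>x\<in>L. x \<noteq> 0 \<longrightarrow> \<epsilon> \<le> norm x"
    and cocompact: "\<exists>C. \<forall>y. \<exists>x\<in>L. norm (y - x) \<le> C"
begin

lemma diff_mem: "x \<in> L \<Longrightarrow> y \<in> L \<Longrightarrow> x - y \<in> L"
  using add_mem uminus_mem by (metis diff_conv_add_uminus)

lemma Ints_scaleR_mem:
  assumes "x \<in> L" "k \<in> \<int>"
  shows "k *\<^sub>R x \<in> L"
proof -
  have nat_mem: "real n *\<^sub>R x \<in> L" for n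
  proof (induction n)
    case (Suc n)
    then have "x + real n *\<^sub>R x \<in> L"
      using assms(1) add_mem by blast
    then show ?case
      by (simp add: algebra_simps)
  qed (simp add: zero_mem)
  obtain n :: int where "k = of_int n"
    using assms(2) Ints_cases by blast
  then have "k *\<^sub>R x = real (nat n) *\<^sub>R x \<or> k *\<^sub>R x = - (real (nat (- n)) *\<^sub>R x)"
    by (cases "n \<ge> 0") auto
  then show ?thesis
    using nat_mem uminus_mem by metis
qed

lemma int_span3_subset:
  assumes "v1 \<in> L" "v2 \<in> L" "v3 \<in> L"
  shows "int_span3 v1 v2 v3 \<subseteq> L"
  using assms by (auto elim!: int_span3_memE intro!: add_mem Ints_scaleR_mem)

lemma finite_inter_cball: "finite (L \<inter> cball 0 B)"
proof -
  obtain \<epsilon> where \<epsilon>: "\<epsilon> > 0" "\<forall>x\<in>L. x \<noteq> 0 \<longrightarrow> \<epsilon> \<le> norm x"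
    using separated by blast
  have "uniform_discrete (L \<inter> cball 0 B)"
  proof (rule uniformI1[OF \<epsilon>(1)])
    fix x y assume "x \<in> L \<inter> cball 0 B" "y \<in> L \<inter> cball 0 B" "dist x y < \<epsilon>"
    then show "x = y"
      using \<epsilon>(2) diff_mem[of x y] by (force simp: dist_norm)
  qed
  then show ?thesis
    using uniform_discrete_finite_iff by blast
qed

lemma exists_det3_nonzero:
  obtains v1 v2 v3 where "v1 \<in> L" "v2 \<in> L" "v3 \<in> L" "det3 v1 v2 v3 \<noteq> 0"
proof -
  obtain C where C: "\<And>y. \<exists>x\<in>L. norm (x - y) \<le> C"
    using cocompact by (metis norm_minus_commute)
  then have "C \<ge> 0"
    by (meson norm_ge_zero order_trans)
  moreover define K where "K = 10 * C + 1"
  moreover obtain x y z where "x \<in> L" "y \<in> L" "z \<in> L"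
    and "norm (x - (K, 0, 0)) \<le> C" "norm (y - (0, K, 0)) \<le> C" "norm (z - (0, 0, K)) \<le> C"
    using C by meson
  ultimately show ?thesis
    using that det3_near_scaled_basis_pos by (metis less_irrefl)
qed

lemma reduction_mod_int_span3:
  assumes v: "v1 \<in> L" "v2 \<in> L" "v3 \<in> L" and D: "det3 v1 v2 v3 \<noteq> 0"
  obtains red where "\<And>x. x - red x \<in> int_span3 v1 v2 v3"
    "\<And>x. x \<in> L \<Longrightarrow> red x \<in> L \<inter> cball 0 (norm v1 + norm v2 + norm v3)"
proof
  define B where "B = norm v1 + norm v2 + norm v3"
  define red where "red x = x - (SOME y. y \<in> int_span3 v1 v2 v3 \<and> norm (x - y) \<le> B)" for x
  have red: "x - red x \<in> int_span3 v1 v2 v3 \<and> norm (red x) \<le> B" for x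
    using someI_ex[OF int_span3_dense[OF D, of x, unfolded Bex_def]]
    unfolding red_def B_def by simp
  then show "x - red x \<in> int_span3 v1 v2 v3" for x
    by blast
  show "red x \<in> L \<inter> cball 0 B" if "x \<in> L" for x
  proof -
    have "x - red x \<in> L"
      using red[of x] int_span3_subset[OF v] by blast
    then have "x - (x - red x) \<in> L"
      using diff_mem[OF that] by blast
    then show ?thesis
      using red[of x] by simp
  qed
qed

text \<open>Pigeonhole: the multiples \<open>0, l, \<dots>, K l\<close> cannot have pairwise distinct representatives in the
  \<open>K\<close>-element set \<open>L \<inter> cball 0 B\<close> modulo \<open>int_span3 v1 v2 v3\<close>.\<close>

lemma small_multiple_in_int_span3:
  assumes v: "v1 \<in> L" "v2 \<in> L" "v3 \<in> L" and D: "det3 v1 v2 v3 \<noteq> 0" and l: "l \<in> L"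
  shows "\<exists>d. 0 < d \<and> d \<le> card (L \<inter> cball 0 (norm v1 + norm v2 + norm v3))
    \<and> real d *\<^sub>R l \<in> int_span3 v1 v2 v3"
proof -
  define F where "F = L \<inter> cball 0 (norm v1 + norm v2 + norm v3)"
  define K where "K = card F"
  obtain red where red: "\<And>x. x - red x \<in> int_span3 v1 v2 v3" "\<And>x. x \<in> L \<Longrightarrow> red x \<in> F"
    using reduction_mod_int_span3[OF v D] unfolding F_def by blast
  define g where "g j = red (real j *\<^sub>R l)" for j :: nat
  have "g ` {0..K} \<subseteq> F"
    unfolding g_def using red(2) Ints_scaleR_mem[OF l Ints_of_nat] by blast
  have "\<not> inj_on g {0..K}"
  proof
    assume "inj_on g {0..K}"
    then have "card {0..K} \<le> card F"
      using card_inj_on_le \<open>g ` {0..K} \<subseteq> F\<close> finite_inter_cball unfolding F_def by blast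
    then show False
      unfolding K_def by simp
  qed
  then obtain i j where "i \<le> K" "j \<le> K" "i \<noteq> j" "g i = g j"
    unfolding inj_on_def by auto
  then obtain i j where ij: "i < j" "j \<le> K" "g i = g j"
    by (metis linorder_neqE_nat)
  have "real (j - i) *\<^sub>R l = (real j *\<^sub>R l - g j) - (real i *\<^sub>R l - g i)"
    using ij by (simp add: of_nat_diff algebra_simps)
  then have "real (j - i) *\<^sub>R l \<in> int_span3 v1 v2 v3"
    unfolding g_def using red(1) by (simp add: int_span3_diff)
  then show ?thesis
    using ij unfolding K_def F_def by (intro exI[of _ "j - i"]) auto
qed

lemma multiple_in_int_span3:
  assumes v: "v1 \<in> L" "v2 \<in> L" "v3 \<in> L" and D: "det3 v1 v2 v3 \<noteq> 0"
  obtains N :: nat where "N > 0" "\<And>l. l \<in> L \<Longrightarrow> real N *\<^sub>R l \<in> int_span3 v1 v2 v3"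
proof
  define K where "K = card (L \<inter> cball 0 (norm v1 + norm v2 + norm v3))"
  show "real (fact K) *\<^sub>R l \<in> int_span3 v1 v2 v3" if l: "l \<in> L" for l
  proof -
    obtain d where d: "0 < d" "d \<le> K" "real d *\<^sub>R l \<in> int_span3 v1 v2 v3"
      using small_multiple_in_int_span3[OF v D l] unfolding K_def by blast
    then obtain q where "fact K = d * q"
      using dvd_fact[of d K] by (auto elim: dvdE)
    then have "real (fact K) *\<^sub>R l = real q *\<^sub>R (real d *\<^sub>R l)"
      by (simp add: mult.commute)
    then show ?thesis
      using int_span3_scaleR[OF d(3) Ints_of_nat[of q]] by (simp only:)
  qed
qed simp

lemma det3_scaled_Ints:
  obtains s :: real where "s > 0"
    "\<And>w1 w2 w3. w1 \<in> L \<Longrightarrow> w2 \<in> L \<Longrightarrow> w3 \<in> L \<Longrightarrow> \<bar>det3 w1 w2 w3\<bar> * s \<in> \<int>"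
proof -
  obtain v1 v2 v3 where v: "v1 \<in> L" "v2 \<in> L" "v3 \<in> L" and D: "det3 v1 v2 v3 \<noteq> 0"
    using exists_det3_nonzero by blast
  obtain N :: nat where N: "N > 0" "\<And>l. l \<in> L \<Longrightarrow> real N *\<^sub>R l \<in> int_span3 v1 v2 v3"
    using multiple_in_int_span3[OF v D] by blast
  define s where "s = real N ^ 3 / \<bar>det3 v1 v2 v3\<bar>"
  have "s > 0"
    unfolding s_def using N(1) D by simp
  moreover have "\<bar>det3 w1 w2 w3\<bar> * s \<in> \<int>" if w: "w1 \<in> L" "w2 \<in> L" "w3 \<in> L" for w1 w2 w3
  proof -
    obtain k where "k \<in> \<int>" "det3 (real N *\<^sub>R w1) (real N *\<^sub>R w2) (real N *\<^sub>R w3) = k * det3 v1 v2 v3"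
      by (rule det3_int_span3[OF N(2)[OF w(1)] N(2)[OF w(2)] N(2)[OF w(3)]])
    then have e: "det3 w1 w2 w3 * real N ^ 3 = k * det3 v1 v2 v3"
      by (simp add: det3_scaleR_all mult.commute)
    have "\<bar>det3 w1 w2 w3\<bar> * s = \<bar>det3 w1 w2 w3 * real N ^ 3\<bar> / \<bar>det3 v1 v2 v3\<bar>"
      unfolding s_def by (simp add: abs_mult)
    also have "\<dots> = \<bar>k\<bar>"
      unfolding e using D by (simp add: abs_mult)
    finally show ?thesis
      using \<open>k \<in> \<int>\<close> by simp
  qed
  ultimately show ?thesis
    using that by blast
qed

definition det3_minimal :: "R3 \<Rightarrow> R3 \<Rightarrow> R3 \<Rightarrow> bool" where
  "det3_minimal u1 u2 u3 \<longleftrightarrow> u1 \<in> L \<and> u2 \<in> L \<and> u3 \<in> L \<and> det3 u1 u2 u3 \<noteq> 0 \<and>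
     (\<forall>w1\<in>L. \<forall>w2\<in>L. \<forall>w3\<in>L. det3 w1 w2 w3 \<noteq> 0 \<longrightarrow> \<bar>det3 u1 u2 u3\<bar> \<le> \<bar>det3 w1 w2 w3\<bar>)"

lemma exists_det3_minimal: "\<exists>u1 u2 u3. det3_minimal u1 u2 u3"
proof -
  obtain v1 v2 v3 where v: "v1 \<in> L" "v2 \<in> L" "v3 \<in> L" and D: "det3 v1 v2 v3 \<noteq> 0"
    using exists_det3_nonzero by blast
  obtain s where s: "s > 0" and Ints: "\<And>w1 w2 w3. w1 \<in> L \<Longrightarrow> w2 \<in> L \<Longrightarrow> w3 \<in> L \<Longrightarrow> \<bar>det3 w1 w2 w3\<bar> * s \<in> \<int>"
    using det3_scaled_Ints by blast
  define P where "P w \<longleftrightarrow> (case w of (w1, w2, w3) \<Rightarrow> w1 \<in> L \<and> w2 \<in> L \<and> w3 \<in> L \<and> det3 w1 w2 w3 \<noteq> 0)"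
    for w
  define m where "m w = (case w of (w1, w2, w3) \<Rightarrow> nat \<lfloor>\<bar>det3 w1 w2 w3\<bar> * s\<rfloor>)" for w
  have nat_floor: "real (nat \<lfloor>z\<rfloor>) = z" if "z \<in> \<int>" "z \<ge> 0" for z :: real
    using that by (metis Ints_cases floor_of_int of_int_0_le_iff of_nat_nat)
  have m: "real (m (w1, w2, w3)) = \<bar>det3 w1 w2 w3\<bar> * s" if "P (w1, w2, w3)" for w1 w2 w3
    using that Ints s unfolding m_def P_def by (simp add: nat_floor)
  obtain u where "P u" and u_min: "\<And>w. P w \<Longrightarrow> m u \<le> m w"
    using ex_has_least_nat[of P "(v1, v2, v3)" m] v D unfolding P_def by auto
  obtain u1 u2 u3 where u: "u = (u1, u2, u3)"
    by (metis prod.collapse)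
  have "\<bar>det3 u1 u2 u3\<bar> \<le> \<bar>det3 w1 w2 w3\<bar>"
    if "w1 \<in> L" "w2 \<in> L" "w3 \<in> L" "det3 w1 w2 w3 \<noteq> 0" for w1 w2 w3
  proof -
    have "P (w1, w2, w3)"
      using that unfolding P_def by simp
    then have "real (m (u1, u2, u3)) \<le> real (m (w1, w2, w3))"
      using u_min u by simp
    then have "\<bar>det3 u1 u2 u3\<bar> * s \<le> \<bar>det3 w1 w2 w3\<bar> * s"
      using m \<open>P u\<close> \<open>P (w1, w2, w3)\<close> u by simp
    then show ?thesis
      using s by simp
  qed
  then have "det3_minimal u1 u2 u3"
    using \<open>P u\<close> u unfolding det3_minimal_def P_def by simp
  then show ?thesis
    by blast
qed

lemma det3_minimal_rotate: "det3_minimal u1 u2 u3 \<Longrightarrow> det3_minimal u2 u3 u1"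
  unfolding det3_minimal_def det3_cyclic[of u1 u2 u3, symmetric] by blast

lemma det3_minimal_first_coordinate:
  assumes u: "det3_minimal u1 u2 u3" and l: "l \<in> L" "l = r1 *\<^sub>R u1 + r2 *\<^sub>R u2 + r3 *\<^sub>R u3"
  shows "r1 \<in> \<int>"
proof (rule ccontr)
  assume "r1 \<notin> \<int>"
  then have "frac r1 \<noteq> 0"
    by (simp add: frac_eq_0_iff)
  then have frac: "0 < frac r1" "frac r1 < 1"
    using frac_ge_0[of r1] frac_lt_1[of r1] by linarith+
  have uL: "u1 \<in> L" "u2 \<in> L" "u3 \<in> L" and D: "det3 u1 u2 u3 \<noteq> 0"
    using u unfolding det3_minimal_def by auto
  define l' where "l' = l - of_int \<lfloor>r1\<rfloor> *\<^sub>R u1"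
  have "l' \<in> L"
    unfolding l'_def using l(1) uL by (intro diff_mem Ints_scaleR_mem) auto
  have "det3 l' u2 u3 = frac r1 * det3 u1 u2 u3"
    unfolding l'_def det3_diff_scaleR_first l(2) det3_combination_first frac_def
    by (simp add: algebra_simps)
  then have "\<bar>det3 l' u2 u3\<bar> < \<bar>det3 u1 u2 u3\<bar>" "det3 l' u2 u3 \<noteq> 0"
    using frac D by (simp_all add: abs_mult)
  moreover have "\<bar>det3 u1 u2 u3\<bar> \<le> \<bar>det3 l' u2 u3\<bar>" if "det3 l' u2 u3 \<noteq> 0"
    using u \<open>l' \<in> L\<close> uL that unfolding det3_minimal_def by blast
  ultimately show False
    by linarith
qed

lemma det3_minimal_basis:
  assumes u: "det3_minimal u1 u2 u3"
  shows "L \<subseteq> int_span3 u1 u2 u3"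
proof
  fix l assume "l \<in> L"
  have "det3 u1 u2 u3 \<noteq> 0"
    using u unfolding det3_minimal_def by auto
  then obtain r1 r2 r3 where r: "l = r1 *\<^sub>R u1 + r2 *\<^sub>R u2 + r3 *\<^sub>R u3"
    using det3_coordinates by blast
  have "r1 \<in> \<int>"
    using det3_minimal_first_coordinate[OF u \<open>l \<in> L\<close> r] .
  moreover have "l = r2 *\<^sub>R u2 + r3 *\<^sub>R u3 + r1 *\<^sub>R u1"
    using r by (simp add: ac_simps)
  then have "r2 \<in> \<int>"
    by (rule det3_minimal_first_coordinate[OF det3_minimal_rotate[OF u] \<open>l \<in> L\<close>])
  moreover have "l = r3 *\<^sub>R u3 + r1 *\<^sub>R u1 + r2 *\<^sub>R u2"
    using r by (simp add: ac_simps)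
  then have "r3 \<in> \<int>"
    by (rule det3_minimal_first_coordinate[OF det3_minimal_rotate[OF det3_minimal_rotate[OF u]] \<open>l \<in> L\<close>])
  ultimately show "l \<in> int_span3 u1 u2 u3"
    unfolding r by (rule int_span3_memI)
qed

lemma trace_diag_mult_Ints:
  assumes "\<And>x. x \<in> L \<Longrightarrow> diag_mult c \<mu> x \<in> L"
  shows "c + 2 * Re \<mu> \<in> \<int>"
proof -
  obtain u1 u2 u3 where u: "det3_minimal u1 u2 u3"
    using exists_det3_minimal by blast
  then have uL: "u1 \<in> L" "u2 \<in> L" "u3 \<in> L" and D: "det3 u1 u2 u3 \<noteq> 0"
    unfolding det3_minimal_def by auto
  have T: "diag_mult c \<mu> u \<in> int_span3 u1 u2 u3" if "u \<in> L" for u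
    using assms[OF that] det3_minimal_basis[OF u] by blast
  note gen = int_span3_generators
  obtain k1 where "k1 \<in> \<int>" "det3 (diag_mult c \<mu> u1) u2 u3 = k1 * det3 u1 u2 u3"
    by (rule det3_int_span3[OF T[OF uL(1)] gen(2,3)])
  moreover obtain k2 where "k2 \<in> \<int>" "det3 u1 (diag_mult c \<mu> u2) u3 = k2 * det3 u1 u2 u3"
    by (rule det3_int_span3[OF gen(1) T[OF uL(2)] gen(3)])
  moreover obtain k3 where "k3 \<in> \<int>" "det3 u1 u2 (diag_mult c \<mu> u3) = k3 * det3 u1 u2 u3"
    by (rule det3_int_span3[OF gen(1,2) T[OF uL(3)]])
  ultimately have "(c + 2 * Re \<mu>) * det3 u1 u2 u3 = (k1 + k2 + k3) * det3 u1 u2 u3"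
    using det3_trace_diag_mult[of c \<mu> u1 u2 u3] by (simp add: algebra_simps)
  then have "c + 2 * Re \<mu> = k1 + k2 + k3"
    using D by simp
  then show ?thesis
    using \<open>k1 \<in> \<int>\<close> \<open>k2 \<in> \<int>\<close> \<open>k3 \<in> \<int>\<close> by simp
qed

end

section \<open>A lattice forces \<open>b\<close> into the image of some \<open>h\<^sub>k\<close>\<close>

lemma bounded_cover_element_off_normal:
  assumes "\<And>g. \<exists>\<gamma>\<in>\<Gamma>. norm (G_mult b \<gamma> g) < R"
  obtains t x w where "(t, x, w) \<in> \<Gamma>" "t \<noteq> 0"
proof -
  obtain \<gamma> where \<gamma>: "\<gamma> \<in> \<Gamma>" "norm (G_mult b \<gamma> (R, 0, 0)) < R"
    using assms by blast
  obtain t x w where t: "\<gamma> = (t, x, w)"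
    by (metis prod.collapse)
  have "\<bar>t + R\<bar> < R"
    using \<gamma>(2) norm_le_norm_triple(1)[where a = "t + R" and b = x and c = w] unfolding t by simp
  then show ?thesis
    using that \<gamma>(1) t by fastforce
qed

lemma norm_commutator_component_le:
  fixes a e k x Y :: "'a::real_normed_field"
  assumes "a \<noteq> 1" "norm e \<le> E" "norm k \<le> R"
  shows "norm ((1 - a) * (Y / (1 - a) - e * k) + (e - 1) * x - Y) \<le> norm (1 - a) * E * R + (E + 1) * norm x"
proof -
  have "(1 - a) * (Y / (1 - a) - e * k) + (e - 1) * x - Y = - ((1 - a) * e * k) + (e - 1) * x"
    using assms(1) by (simp add: field_simps)
  also have "norm \<dots> \<le> norm ((1 - a) * e * k) + norm ((e - 1) * x)"
    by (metis norm_minus_cancel norm_triangle_ineq)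
  also have "\<dots> \<le> norm (1 - a) * norm e * norm k + (norm e + 1) * norm x"
    using norm_triangle_ineq4[of e 1] by (simp add: norm_mult mult_right_mono)
  also have "\<dots> \<le> norm (1 - a) * E * R + (E + 1) * norm x"
    using assms(2,3) order_trans[OF norm_ge_zero assms(2)]
    by (intro add_mono mult_mono mult_right_mono) auto
  finally show ?thesis .
qed

text \<open>Commutators \<open>\<delta> \<gamma>\<^sub>0 \<delta>\<^sup>-\<^sup>1 \<gamma>\<^sub>0\<^sup>-\<^sup>1\<close> with a fixed \<open>\<gamma>\<^sub>0 \<in> \<Gamma>\<close> off the normal subgroup and \<open>\<delta>\<close> from
  a bounded fundamental domain of \<open>\<Gamma>\<close> come uniformly close to any point of the normal subgroup.\<close>

lemma G_normal_part_near:
  assumes S: "G_subgroup b \<Gamma>" and R: "\<And>g. \<exists>\<gamma>\<in>\<Gamma>. norm (G_mult b \<gamma> g) < R"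
    and \<gamma>\<^sub>0: "(t, x, w) \<in> \<Gamma>" and t: "t \<noteq> 0"
  shows "\<exists>y z. (0, y, z) \<in> \<Gamma> \<and> \<bar>y - Y\<bar> \<le> \<bar>1 - exp t\<bar> * exp R * R + (exp R + 1) * \<bar>x\<bar>
    \<and> norm (z - Z) \<le> norm (1 - ad_exp b t) * exp R * R + (exp R + 1) * norm w"
proof -
  have c: "exp t \<noteq> 1" and \<mu>: "ad_exp b t \<noteq> 1"
    using t ad_exp_eq_1_iff by auto
  define p :: Gelem where "p = (0, Y / (1 - exp t), Z / (1 - ad_exp b t))"
  obtain \<gamma> where \<gamma>: "\<gamma> \<in> \<Gamma>" "norm (G_mult b \<gamma> p) < R"
    using R by blast
  obtain s k1 k2 where q: "G_mult b \<gamma> p = (s, k1, k2)"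
    by (metis prod.collapse)
  obtain \<sigma> y z where \<delta>: "G_inv b \<gamma> = (\<sigma>, y, z)"
    by (metis prod.collapse)
  have "p = G_mult b (G_inv b \<gamma>) (s, k1, k2)"
    unfolding q[symmetric] by (simp add: G_mult_assoc[symmetric] G_mult_inv_left)
  then have \<sigma>: "\<sigma> = - s" and y: "y = Y / (1 - exp t) - exp \<sigma> * k1"
    and z: "z = Z / (1 - ad_exp b t) - ad_exp b \<sigma> * k2"
    unfolding p_def \<delta> by auto
  have "\<bar>s\<bar> < R" "\<bar>k1\<bar> < R" "norm k2 < R"
    using \<gamma>(2) norm_le_norm_triple[where a = s and b = k1 and c = k2] unfolding q by auto
  then have bounds: "norm (exp \<sigma>) \<le> exp R" "norm (ad_exp b \<sigma>) \<le> exp R" "norm k1 \<le> R" "norm k2 \<le> R"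
    using \<sigma> by (auto simp: norm_ad_exp)
  have "G_mult b (G_mult b (G_mult b (\<sigma>, y, z) (t, x, w)) (G_inv b (\<sigma>, y, z))) (G_inv b (t, x, w)) \<in> \<Gamma>"
    using S \<gamma>\<^sub>0 G_subgroup_inv[OF S \<gamma>(1)] unfolding \<delta> by (intro G_subgroup_mult G_subgroup_inv)
  then have "(0, (1 - exp t) * y + (exp \<sigma> - 1) * x, (1 - ad_exp b t) * z + (ad_exp b \<sigma> - 1) * w) \<in> \<Gamma>"
    unfolding G_commutator .
  moreover have "\<bar>(1 - exp t) * y + (exp \<sigma> - 1) * x - Y\<bar> \<le> \<bar>1 - exp t\<bar> * exp R * R + (exp R + 1) * \<bar>x\<bar>"
    using norm_commutator_component_le[OF c bounds(1,3), of Y x] unfolding y by simp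
  moreover have "norm ((1 - ad_exp b t) * z + (ad_exp b \<sigma> - 1) * w - Z)
      \<le> norm (1 - ad_exp b t) * exp R * R + (exp R + 1) * norm w"
    using norm_commutator_component_le[OF \<mu> bounds(2,4), of Z w] unfolding z .
  ultimately show ?thesis
    by blast
qed

lemma G_normal_part_cocompact:
  assumes "G_subgroup b \<Gamma>" "\<And>g. \<exists>\<gamma>\<in>\<Gamma>. norm (G_mult b \<gamma> g) < R" "(t, x, w) \<in> \<Gamma>" "t \<noteq> 0"
  shows "\<exists>C. \<forall>Y Z. \<exists>y z. (0, y, z) \<in> \<Gamma> \<and> norm ((Y, Z) - (y, z)) \<le> C"
proof -
  define C1 where "C1 = \<bar>1 - exp t\<bar> * exp R * R + (exp R + 1) * \<bar>x\<bar>"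
  define C2 where "C2 = norm (1 - ad_exp b t) * exp R * R + (exp R + 1) * norm w"
  have "\<exists>y z. (0, y, z) \<in> \<Gamma> \<and> norm ((Y, Z) - (y, z)) \<le> C1 + C2" for Y Z
  proof -
    obtain y z where "(0, y, z) \<in> \<Gamma>" "\<bar>y - Y\<bar> \<le> C1" "norm (z - Z) \<le> C2"
      using G_normal_part_near[OF assms] unfolding C1_def C2_def by blast
    moreover have "norm ((Y, Z) - (y, z)) \<le> \<bar>y - Y\<bar> + norm (z - Z)"
      using norm_Pair_le[of "Y - y" "Z - z"] by (simp add: norm_minus_commute abs_minus_commute)
    ultimately show ?thesis
      by force
  qed
  then show ?thesis
    by blast
qed

definition normal_lattice :: "Gelem set \<Rightarrow> R3 set" where
  "normal_lattice \<Gamma> = {(y, Re z, Im z) | y z. (0, y, z) \<in> \<Gamma>}"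

lemma normal_lattice_separated:
  assumes "G_subgroup b \<Gamma>" "discrete \<Gamma>"
  shows "\<exists>\<epsilon>>0. \<forall>v\<in>normal_lattice \<Gamma>. v \<noteq> 0 \<longrightarrow> \<epsilon> \<le> norm v"
proof -
  obtain \<epsilon> where \<epsilon>: "\<epsilon> > 0" "\<forall>g\<in>\<Gamma>. dist G_one g < \<epsilon> \<longrightarrow> g = G_one"
    using assms G_subgroup_one unfolding discrete_def isolated_in_dist_Ex_iff by blast
  have "\<epsilon> \<le> norm v" if v: "v \<in> normal_lattice \<Gamma>" "v \<noteq> 0" for v
  proof -
    obtain y z where yz: "v = (y, Re z, Im z)" "(0, y, z) \<in> \<Gamma>"
      using v(1) unfolding normal_lattice_def by blast
    moreover have "(0, y, z) \<noteq> G_one"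
      using v(2) unfolding yz G_one_def by (auto simp: zero_prod_def)
    moreover have "dist G_one (0, y, z) = norm (y, Re z, Im z)"
      by (simp add: G_one_def dist_norm norm_Pair cmod_def)
    ultimately show ?thesis
      using \<epsilon>(2) by force
  qed
  then show ?thesis
    using \<epsilon>(1) by blast
qed

lemma normal_lattice_cocompact:
  assumes \<Gamma>: "G_lattice b \<Gamma>" and \<gamma>\<^sub>0: "(t, x, w) \<in> \<Gamma>" "t \<noteq> 0"
  shows "\<exists>C. \<forall>v. \<exists>v'\<in>normal_lattice \<Gamma>. norm (v - v') \<le> C"
proof -
  obtain R where "\<And>g. \<exists>\<gamma>\<in>\<Gamma>. norm (G_mult b \<gamma> g) < R"
    using G_lattice_bounded_cover[OF \<Gamma>] by blast
  then obtain C where C: "\<forall>Y Z. \<exists>y z. (0, y, z) \<in> \<Gamma> \<and> norm ((Y, Z) - (y, z)) \<le> C"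
    using G_normal_part_cocompact[OF _ _ \<gamma>\<^sub>0] \<Gamma> unfolding G_lattice_def by blast
  have "\<exists>v'\<in>normal_lattice \<Gamma>. norm (v - v') \<le> C" for v :: R3
  proof -
    obtain Y a a' where v: "v = (Y, a, a')"
      by (metis prod.collapse)
    obtain y z where "(0, y, z) \<in> \<Gamma>" "norm ((Y, Complex a a') - (y, z)) \<le> C"
      using C by blast
    moreover have "norm (v - (y, Re z, Im z)) = norm ((Y, Complex a a') - (y, z))"
      unfolding v by (simp add: norm_Pair cmod_def)
    ultimately show ?thesis
      unfolding normal_lattice_def by force
  qed
  then show ?thesis
    by blast
qed

lemma R3_lattice_normal_lattice:
  assumes \<Gamma>: "G_lattice b \<Gamma>" and \<gamma>\<^sub>0: "(t, x, w) \<in> \<Gamma>" "t \<noteq> 0"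
  shows "R3_lattice (normal_lattice \<Gamma>)"
proof
  have S: "G_subgroup b \<Gamma>"
    using \<Gamma> G_lattice_def by blast
  show "0 \<in> normal_lattice \<Gamma>"
    using G_subgroup_one[OF S] unfolding normal_lattice_def G_one_def zero_prod_def by force
  show "v + v' \<in> normal_lattice \<Gamma>" if vv': "v \<in> normal_lattice \<Gamma>" "v' \<in> normal_lattice \<Gamma>" for v v'
  proof -
    obtain y z y' z' where "v = (y, Re z, Im z)" "v' = (y', Re z', Im z')" "(0, y, z) \<in> \<Gamma>" "(0, y', z') \<in> \<Gamma>"
      using vv' unfolding normal_lattice_def by blast
    moreover from this have "(0, y + y', z + z') \<in> \<Gamma>"
      using G_subgroup_mult[OF S] by fastforce
    ultimately show ?thesis
      unfolding normal_lattice_def by force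
  qed
  show "- v \<in> normal_lattice \<Gamma>" if v: "v \<in> normal_lattice \<Gamma>" for v
  proof -
    obtain y z where "v = (y, Re z, Im z)" "(0, y, z) \<in> \<Gamma>"
      using v unfolding normal_lattice_def by blast
    moreover from this have "(0, - y, - z) \<in> \<Gamma>"
      using G_subgroup_inv[OF S] by fastforce
    ultimately show ?thesis
      unfolding normal_lattice_def by force
  qed
  show "\<exists>\<epsilon>>0. \<forall>v\<in>normal_lattice \<Gamma>. v \<noteq> 0 \<longrightarrow> \<epsilon> \<le> norm v"
    using normal_lattice_separated S \<Gamma> unfolding G_lattice_def by blast
  show "\<exists>C. \<forall>v. \<exists>v'\<in>normal_lattice \<Gamma>. norm (v - v') \<le> C"
    using normal_lattice_cocompact[OF \<Gamma> \<gamma>\<^sub>0] .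
qed

lemma diag_mult_normal_lattice:
  assumes S: "G_subgroup b \<Gamma>" and "(t, x, w) \<in> \<Gamma>" "v \<in> normal_lattice \<Gamma>"
  shows "diag_mult (exp t) (ad_exp b t) v \<in> normal_lattice \<Gamma>"
proof -
  obtain y z where v: "v = (y, Re z, Im z)" "(0, y, z) \<in> \<Gamma>"
    using assms(3) unfolding normal_lattice_def by blast
  have "G_mult b (G_mult b (t, x, w) (0, y, z)) (G_inv b (t, x, w)) \<in> \<Gamma>"
    using S assms(2) v(2) by (intro G_subgroup_mult G_subgroup_inv)
  then have "(0, exp t * y, ad_exp b t * z) \<in> \<Gamma>"
    by (simp only: G_conj_normal)
  then show ?thesis
    unfolding normal_lattice_def v diag_mult_def by force
qed

lemma G_lattice_trace_Ints:
  assumes "G_lattice b \<Gamma>" "(t, x, w) \<in> \<Gamma>" "t \<noteq> 0"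
  shows "exp t + 2 * Re (ad_exp b t) \<in> \<int>"
  using R3_lattice.trace_diag_mult_Ints[OF R3_lattice_normal_lattice[OF assms]]
    diag_mult_normal_lattice assms G_lattice_def by blast

lemma rational_root_fmn:
  fixes x :: real
  assumes "x \<in> \<rat>" "x ^ 3 - of_int m * x\<^sup>2 + of_int n * x - 1 = 0"
  shows "x = 1 \<or> x = -1"
proof -
  obtain p q :: int where pq: "q > 0" "coprime p q" "x = of_int p / of_int q"
    using Rats_cases'[OF assms(1)] by blast
  then have "(of_int p / of_int q) ^ 3 - of_int m * (of_int p / of_int q)\<^sup>2 + of_int n * (of_int p / of_int q) - 1
      = (0::real)"
    using assms(2) by simp
  then have "(of_int (p ^ 3 - m * p\<^sup>2 * q + n * p * q\<^sup>2 - q ^ 3) :: real) = 0"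
    using pq(1) by (simp add: field_simps power2_eq_square power3_eq_cube)
  then have eq: "p ^ 3 - m * p\<^sup>2 * q + n * p * q\<^sup>2 - q ^ 3 = 0"
    by (simp only: of_int_eq_0_iff)
  have "p ^ 3 = q * (m * p\<^sup>2 - n * p * q + q\<^sup>2)"
    using eq by (simp add: algebra_simps power2_eq_square power3_eq_cube)
  then have "q dvd p ^ 3"
    by simp
  moreover have "coprime q (p ^ 3)"
    using pq(2) by (simp add: coprime_commute)
  ultimately have "is_unit q"
    using coprime_absorb_left by blast
  then have "q = 1"
    using pq(1) by simp
  have "q ^ 3 = p * (p\<^sup>2 - m * p * q + n * q\<^sup>2)"
    using eq by (simp add: algebra_simps power2_eq_square power3_eq_cube)
  then have "p dvd q ^ 3"
    by simp
  then have "p dvd 1"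
    using \<open>q = 1\<close> by simp
  then show ?thesis
    using pq(3) \<open>q = 1\<close> by auto
qed

lemma int_mult_eq_9_square_eq_imp_3:
  fixes m n :: int
  assumes mn: "m * n = 9" and m2: "m\<^sup>2 = 3 * n"
  shows "m = 3" "n = 3"
proof -
  have "(m - 3) * ((2 * m + 3)\<^sup>2 + 27) = 4 * (m ^ 3 - 27)"
    by (simp add: algebra_simps power2_eq_square power3_eq_cube)
  also have "m ^ 3 = 3 * (m * n)"
    using m2 by (simp add: power2_eq_square power3_eq_cube)
  finally have "(m - 3) * ((2 * m + 3)\<^sup>2 + 27) = 0"
    using mn by simp
  moreover have "(2 * m + 3)\<^sup>2 + 27 \<noteq> 0"
    by (smt (verit) zero_le_power2)
  ultimately show "m = 3" "n = 3"
    using m2 by auto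
qed

lemma vieta_double_root_elimination:
  fixes c r :: real
  assumes "c * r\<^sup>2 = 1" "of_int m = c + 2 * r" "of_int n = r\<^sup>2 + 2 * c * r"
  shows "r * (6 * of_int n - 2 * (of_int m)\<^sup>2) = 9 - of_int m * of_int n"
proof -
  have "r * (6 * (r\<^sup>2 + 2 * c * r) - 2 * (c + 2 * r)\<^sup>2) - (9 - (c + 2 * r) * (r\<^sup>2 + 2 * c * r))
      = 9 * (c * r\<^sup>2 - 1)"
    by (simp add: algebra_simps power2_eq_square power3_eq_cube)
  then show ?thesis
    using assms by simp
qed

text \<open>Elimination between \<open>f\<^sub>m\<^sub>,\<^sub>n\<close> and its derivative expresses a double root \<open>r\<close> rationally
  in \<open>m, n\<close>, unless \<open>m\<^sup>2 = 3 n\<close>, which forces \<open>f = (x - 1)\<^sup>3\<close>.\<close>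

lemma vieta_double_root_eq_1:
  fixes c r :: real
  assumes c: "c * r\<^sup>2 = 1" and m: "of_int m = c + 2 * r" and n: "of_int n = r\<^sup>2 + 2 * c * r"
  shows "c = 1"
proof -
  have key: "r * (6 * of_int n - 2 * (of_int m)\<^sup>2) = 9 - of_int m * of_int n"
    using vieta_double_root_elimination[OF assms] .
  have root: "x ^ 3 - of_int m * x\<^sup>2 + of_int n * x - 1 = 0" if "x = r \<or> x = c" for x
  proof -
    have "x ^ 3 - (c + 2 * r) * x\<^sup>2 + (r\<^sup>2 + 2 * c * r) * x - 1 = c * r\<^sup>2 - 1"
      using that by (auto simp: algebra_simps power2_eq_square power3_eq_cube)
    then show ?thesis
      using c m n by simp
  qed
  show ?thesis
  proof (cases "6 * n - 2 * m\<^sup>2 = 0")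
    case False
    then have "(of_int (6 * n - 2 * m\<^sup>2) :: real) \<noteq> 0"
      by (simp only: of_int_eq_0_iff) simp
    then have "r = (9 - of_int m * of_int n) / (6 * of_int n - 2 * (of_int m)\<^sup>2)"
      using key by (simp add: field_simps)
    then have "r \<in> \<rat>"
      by simp
    then have "r\<^sup>2 = 1"
      using rational_root_fmn root by fastforce
    then show ?thesis
      using c by simp
  next
    case True
    then have "(of_int (6 * n - 2 * m\<^sup>2) :: real) = 0"
      by (simp only: of_int_0)
    then have "9 - of_int m * of_int n = (0::real)"
      using key by (metis mult_zero_right of_int_diff of_int_mult of_int_numeral of_int_power)
    then have "of_int (m * n) = (of_int 9 :: real)"
      by simp
    then have "m * n = 9"
      by (simp only: of_int_eq_iff)
    moreover have "m\<^sup>2 = 3 * n"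
      using True by simp
    ultimately have "m = 3" "n = 3"
      by (rule int_mult_eq_9_square_eq_imp_3)+
    then have "(c - 1) ^ 3 = 0"
      using root[of c] by (simp add: algebra_simps power2_eq_square power3_eq_cube)
    then show ?thesis
      by simp
  qed
qed

lemma fmn_factor_vieta:
  fixes c :: real and \<mu> :: complex
  assumes "c * (cmod \<mu>)\<^sup>2 = 1" "of_int m = c + 2 * Re \<mu>" "of_int n = (cmod \<mu>)\<^sup>2 + 2 * c * Re \<mu>"
  shows "fmn m n z = (z - of_real c) * (z - \<mu>) * (z - cnj \<mu>)"
proof -
  have "(z - of_real c) * (z - \<mu>) * (z - cnj \<mu>)
     = z ^ 3 - (of_real c + (\<mu> + cnj \<mu>)) * z\<^sup>2 + (of_real c * (\<mu> + cnj \<mu>) + \<mu> * cnj \<mu>) * z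
       - of_real c * (\<mu> * cnj \<mu>)"
    by (simp add: algebra_simps power2_eq_square power3_eq_cube)
  also have "\<dots> = z ^ 3 - of_real (c + 2 * Re \<mu>) * z\<^sup>2 + of_real ((cmod \<mu>)\<^sup>2 + 2 * c * Re \<mu>) * z
       - of_real (c * (cmod \<mu>)\<^sup>2)"
    unfolding complex_add_cnj complex_norm_square[symmetric] by (simp add: algebra_simps)
  also have "\<dots> = fmn m n z"
    unfolding fmn_def assms(1) assms(2,3)[symmetric] by simp
  finally show ?thesis
    by simp
qed

lemma fmn_roots:
  assumes f: "\<And>z. fmn m n z = (z - of_real c) * (z - \<alpha>) * (z - cnj \<alpha>)" and \<alpha>: "Im \<alpha> > 0"
  shows "real_root m n = c" "upper_root m n = \<alpha>" "phi_mn m n = Arg \<alpha>"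
proof -
  show "real_root m n = c"
    unfolding real_root_def
  proof (rule the_equality)
    fix x assume "fmn m n (complex_of_real x) = 0"
    then have "complex_of_real x = of_real c \<or> complex_of_real x = \<alpha> \<or> complex_of_real x = cnj \<alpha>"
      using f by simp
    moreover have "complex_of_real x \<noteq> \<alpha>" "complex_of_real x \<noteq> cnj \<alpha>"
      using \<alpha> by (auto simp: complex_eq_iff)
    ultimately show "x = c"
      by simp
  qed (use f in simp)
  show upper: "upper_root m n = \<alpha>"
    unfolding upper_root_def
  proof (rule the_equality)
    fix \<beta> assume \<beta>: "Im \<beta> > 0 \<and> fmn m n \<beta> = 0"
    then have "\<beta> = of_real c \<or> \<beta> = \<alpha> \<or> \<beta> = cnj \<alpha>"
      using f by auto
    then show "\<beta> = \<alpha>"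
      using \<beta> \<alpha> by auto
  qed (use f \<alpha> in simp)
  have "\<alpha> \<noteq> 0"
    using \<alpha> by auto
  show "phi_mn m n = Arg \<alpha>"
    unfolding phi_mn_def upper
  proof (rule the_equality)
    show "0 < Arg \<alpha> \<and> Arg \<alpha> < pi \<and> \<alpha> = of_real (cmod \<alpha>) * exp (\<i> * of_real (Arg \<alpha>))"
      using Arg_lt_pi[of \<alpha>] \<alpha> Arg_eq[OF \<open>\<alpha> \<noteq> 0\<close>] by simp
    fix \<phi> assume \<phi>: "0 < \<phi> \<and> \<phi> < pi \<and> \<alpha> = of_real (cmod \<alpha>) * exp (\<i> * of_real \<phi>)"
    have "Arg \<alpha> = \<phi>"
      by (rule Arg_unique[of "cmod \<alpha>"]) (use \<phi> \<open>\<alpha> \<noteq> 0\<close> in auto)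
    then show "\<phi> = Arg \<alpha>"
      by simp
  qed
qed

lemma fmn_vieta_constant:
  assumes f: "\<And>z. fmn m n z = (z - of_real c) * (z - \<alpha>) * (z - cnj \<alpha>)"
  shows "c * (cmod \<alpha>)\<^sup>2 = 1"
proof -
  have "fmn m n 0 = - (of_real c * (\<alpha> * cnj \<alpha>))"
    using f[of 0] by simp
  then have "complex_of_real (c * (cmod \<alpha>)\<^sup>2) = 1"
    unfolding complex_norm_square[symmetric] fmn_def by simp
  then show ?thesis
    by (metis of_real_eq_1_iff)
qed

lemma fmn_excluded_iff:
  assumes f: "\<And>z. fmn m n z = (z - of_real c) * (z - \<alpha>) * (z - cnj \<alpha>)" and \<alpha>: "Im \<alpha> \<noteq> 0"
  shows "(m, n) \<in> {(0, 0), (1, 1), (2, 2)} \<longleftrightarrow> c = 1"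
proof
  assume "(m, n) \<in> {(0, 0), (1, 1), (2, 2)}"
  then have "fmn m n 1 = 0"
    unfolding fmn_def by auto
  moreover have "1 - \<alpha> \<noteq> 0" "1 - cnj \<alpha> \<noteq> 0"
    using \<alpha> by (auto simp: complex_eq_iff)
  ultimately show "c = 1"
    using f[of 1] by simp
next
  assume c: "c = 1"
  then have "fmn m n 1 = 0"
    using f by simp
  then have "m = n"
    unfolding fmn_def by (simp add: algebra_simps)
  have norm_\<alpha>: "(cmod \<alpha>)\<^sup>2 = 1"
    using fmn_vieta_constant[OF f] c by simp
  have "fmn m n (-1) = -2 * ((1 + \<alpha>) * (1 + cnj \<alpha>))"
    using f[of "-1"] c by (simp add: algebra_simps)
  also have "(1 + \<alpha>) * (1 + cnj \<alpha>) = 1 + (\<alpha> + cnj \<alpha>) + \<alpha> * cnj \<alpha>"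
    by (simp add: algebra_simps)
  also have "\<dots> = of_real (2 + 2 * Re \<alpha>)"
    unfolding complex_add_cnj complex_norm_square[symmetric] norm_\<alpha> by simp
  finally have "of_int m = 1 + 2 * Re \<alpha>"
    unfolding fmn_def \<open>m = n\<close> by (simp add: complex_eq_iff)
  moreover have "(Re \<alpha>)\<^sup>2 < 1"
    using norm_\<alpha> \<alpha> by (simp add: cmod_power2) (smt (verit) zero_less_power2)
  then have "\<bar>Re \<alpha>\<bar> < 1"
    by (simp add: abs_square_less_1)
  ultimately have "m = 0 \<or> m = 1 \<or> m = 2"
    by linarith
  then show "(m, n) \<in> {(0, 0), (1, 1), (2, 2)}"
    using \<open>m = n\<close> by auto
qed

lemma h_eq_iff:
  assumes f: "\<And>z. fmn m n z = (z - of_real (exp t)) * (z - \<alpha>) * (z - cnj \<alpha>)"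
    and "Im \<alpha> > 0" "t \<noteq> 0"
  shows "h k (m, n) = b \<longleftrightarrow> t * b = Arg \<alpha> + 2 * of_int k * pi"
  using fmn_roots[OF assms(1,2)] assms(3) unfolding h_def by (auto simp: field_simps)

lemma G_lattice_vieta:
  assumes \<Gamma>: "G_lattice b \<Gamma>" and \<gamma>: "(t, x, w) \<in> \<Gamma>" "t \<noteq> 0"
  obtains m n :: int where "of_int m = exp t + 2 * Re (ad_exp b t)"
    "of_int n = (norm (ad_exp b t))\<^sup>2 + 2 * exp t * Re (ad_exp b t)"
proof -
  define \<mu> where "\<mu> = ad_exp b t"
  have "G_inv b (t, x, w) \<in> \<Gamma>"
    using \<Gamma> \<gamma>(1) G_subgroup_inv unfolding G_lattice_def by blast
  then have "exp (-t) + 2 * Re (ad_exp b (-t)) \<in> \<int>"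
    using G_lattice_trace_Ints[OF \<Gamma>] \<gamma>(2) by simp
  moreover have "Re (ad_exp b (-t)) = exp t * Re \<mu>"
  proof -
    have "Re (ad_exp b (-t)) = Re \<mu> / (norm \<mu>)\<^sup>2"
      unfolding ad_exp_minus \<mu>_def by (simp add: cmod_power2)
    then show ?thesis
      using norm_ad_exp_squared[of b t] unfolding \<mu>_def by (simp add: exp_minus divide_inverse)
  qed
  then have "exp (-t) + 2 * Re (ad_exp b (-t)) = (norm \<mu>)\<^sup>2 + 2 * exp t * Re \<mu>"
    using norm_ad_exp_squared[of b t] unfolding \<mu>_def by simp
  moreover have "exp t + 2 * Re \<mu> \<in> \<int>"
    unfolding \<mu>_def using G_lattice_trace_Ints[OF \<Gamma> \<gamma>] .
  ultimately show ?thesis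
    using that unfolding \<mu>_def by (metis Ints_cases)
qed

lemma G_lattice_element_upper:
  assumes \<Gamma>: "G_lattice b \<Gamma>"
  obtains t x w where "(t, x, w) \<in> \<Gamma>" "t \<noteq> 0" "Im (ad_exp b t) \<ge> 0"
proof -
  obtain R where "\<And>g. \<exists>\<gamma>\<in>\<Gamma>. norm (G_mult b \<gamma> g) < R"
    using G_lattice_bounded_cover[OF \<Gamma>] by blast
  then obtain t x w where \<gamma>: "(t, x, w) \<in> \<Gamma>" "t \<noteq> 0"
    by (rule bounded_cover_element_off_normal)
  show ?thesis
  proof (cases "Im (ad_exp b t) \<ge> 0")
    case False
    have "G_inv b (t, x, w) \<in> \<Gamma>"
      using \<Gamma> \<gamma>(1) G_subgroup_inv unfolding G_lattice_def by blast
    moreover have "Im (ad_exp b (-t)) \<ge> 0"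
      using False unfolding ad_exp_minus by (simp add: divide_nonpos_nonneg)
    ultimately show ?thesis
      using that \<gamma>(2) by simp
  qed (use that \<gamma> in blast)
qed

lemma G_lattice_imp_in_h_image:
  assumes \<Gamma>: "G_lattice b \<Gamma>"
  shows "b \<in> (\<Union>k. h k ` Sigma')"
proof -
  obtain t x w where \<gamma>: "(t, x, w) \<in> \<Gamma>" "t \<noteq> 0" "Im (ad_exp b t) \<ge> 0"
    using G_lattice_element_upper[OF \<Gamma>] by blast
  define c where "c = exp t"
  define \<mu> where "\<mu> = ad_exp b t"
  have c: "c * (cmod \<mu>)\<^sup>2 = 1" "c \<noteq> 1"
    using \<gamma>(2) norm_ad_exp_squared[of b t] unfolding c_def \<mu>_def by (simp_all add: exp_minus)
  obtain m n where m: "of_int m = c + 2 * Re \<mu>" and n: "of_int n = (cmod \<mu>)\<^sup>2 + 2 * c * Re \<mu>"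
    using G_lattice_vieta[OF \<Gamma> \<gamma>(1,2)] unfolding c_def \<mu>_def by blast
  have "Im \<mu> \<noteq> 0"
  proof
    assume "Im \<mu> = 0"
    then have "(cmod \<mu>)\<^sup>2 = (Re \<mu>)\<^sup>2"
      by (simp add: cmod_power2)
    then show False
      using vieta_double_root_eq_1[of c "Re \<mu>" m n] c m n by simp
  qed
  then have \<mu>: "Im \<mu> > 0"
    using \<gamma>(3) unfolding \<mu>_def by simp
  have f: "\<And>z. fmn m n z = (z - of_real c) * (z - \<mu>) * (z - cnj \<mu>)"
    using fmn_factor_vieta[OF c(1) m n] .
  then have "\<exists>c' \<alpha>. Im \<alpha> \<noteq> 0 \<and> (\<forall>z. fmn m n z = (z - of_real c') * (z - \<alpha>) * (z - cnj \<alpha>))"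
    using \<mu> by (intro exI[of _ c] exI[of _ \<mu>]) auto
  then have "(m, n) \<in> Sigma'"
    unfolding Sigma'_def Sigma_def using \<mu> fmn_excluded_iff[OF f] c(2) by simp
  moreover obtain k where "t * b = Arg \<mu> + 2 * of_int k * pi"
    using ad_exp_eq_iff[of \<mu> t b] norm_ad_exp unfolding \<mu>_def by blast
  then have "h k (m, n) = b"
    using h_eq_iff[OF f[unfolded c_def] \<mu> \<gamma>(2)] by simp
  ultimately show ?thesis
    by blast
qed

section \<open>A lattice for every \<open>b\<close> in the image of some \<open>h\<^sub>k\<close>\<close>

lemma Sigma'_roots:
  assumes "(m, n) \<in> Sigma'"
  obtains c \<alpha> where "\<And>z. fmn m n z = (z - of_real c) * (z - \<alpha>) * (z - cnj \<alpha>)"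
    "Im \<alpha> > 0" "c > 0" "c \<noteq> 1" "c * (cmod \<alpha>)\<^sup>2 = 1"
proof -
  obtain c \<alpha>\<^sub>0 where "Im \<alpha>\<^sub>0 \<noteq> 0" and f0: "\<And>z. fmn m n z = (z - of_real c) * (z - \<alpha>\<^sub>0) * (z - cnj \<alpha>\<^sub>0)"
    using assms unfolding Sigma'_def Sigma_def by auto
  define \<alpha> where "\<alpha> = (if Im \<alpha>\<^sub>0 > 0 then \<alpha>\<^sub>0 else cnj \<alpha>\<^sub>0)"
  have \<alpha>: "Im \<alpha> > 0"
    unfolding \<alpha>_def using \<open>Im \<alpha>\<^sub>0 \<noteq> 0\<close> by auto
  have f: "\<And>z. fmn m n z = (z - of_real c) * (z - \<alpha>) * (z - cnj \<alpha>)"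
    unfolding \<alpha>_def using f0 by (simp add: mult_ac)
  have c_norm: "c * (cmod \<alpha>)\<^sup>2 = 1"
    using fmn_vieta_constant[OF f] .
  then have "c > 0"
    by (smt (verit) mult_nonpos_nonneg zero_le_power2)
  moreover have "c \<noteq> 1"
    using fmn_excluded_iff[OF f] \<alpha> assms unfolding Sigma'_def by auto
  ultimately show ?thesis
    using that f \<alpha> c_norm by blast
qed

definition real_coords :: "real \<times> complex \<Rightarrow> R3" where
  "real_coords w = (fst w, Re (snd w), Im (snd w))"

lemma linear_real_coords: "linear real_coords"
  by (rule linearI) (simp_all add: real_coords_def)

lemma inj_real_coords: "inj real_coords"
  unfolding real_coords_def inj_def by (auto simp: complex_eq_iff prod_eq_iff)

locale lattice_construction =
  fixes b c :: real and \<alpha> :: complex and m n :: int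
  assumes c_pos: "c > 0" and c_ne_1: "c \<noteq> 1" and Im_\<alpha>: "Im \<alpha> > 0"
    and c_root: "c ^ 3 = of_int m * c\<^sup>2 - of_int n * c + 1"
    and \<alpha>_root: "\<alpha> ^ 3 = of_int m * \<alpha>\<^sup>2 - of_int n * \<alpha> + 1"
    and ad_exp_ln: "ad_exp b (ln c) = \<alpha>"
begin

text \<open>The embeddings \<open>\<theta> \<mapsto> c\<close> and \<open>\<theta> \<mapsto> \<alpha>\<close> of \<open>\<rat>(\<theta>)\<close>, \<open>\<theta>\<close> a root of \<open>f\<^sub>m\<^sub>,\<^sub>n\<close>, in the
  basis \<open>1, \<theta>, \<theta>\<^sup>2\<close>; \<open>root_lattice\<close> is the image of \<open>\<int>[\<theta>]\<close>.\<close>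

definition minkowski :: "R3 \<Rightarrow> real \<times> complex" where
  "minkowski x = (fst x + fst (snd x) * c + snd (snd x) * c\<^sup>2,
     of_real (fst x) + of_real (fst (snd x)) * \<alpha> + of_real (snd (snd x)) * \<alpha>\<^sup>2)"

definition root_lattice :: "(real \<times> complex) set" where
  "root_lattice = minkowski ` (\<int> \<times> \<int> \<times> \<int>)"

lemma minkowski_add: "minkowski (x + y) = minkowski x + minkowski y"
  unfolding minkowski_def by (simp add: algebra_simps)

lemma minkowski_uminus: "minkowski (- x) = - minkowski x"
  unfolding minkowski_def by (simp add: algebra_simps)

lemma linear_minkowski: "linear minkowski"
  by (rule linearI) (simp_all add: minkowski_add minkowski_def algebra_simps scaleR_conv_of_real)

lemma root_lattice_zero: "0 \<in> root_lattice"
proof -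
  have "minkowski (0, 0, 0) = 0"
    by (simp add: minkowski_def zero_prod_def)
  then show ?thesis
    unfolding root_lattice_def by (metis Ints_0 SigmaI image_eqI)
qed

lemma root_lattice_add:
  assumes "v \<in> root_lattice" "v' \<in> root_lattice"
  shows "v + v' \<in> root_lattice"
proof -
  obtain x where x: "x \<in> \<int> \<times> \<int> \<times> \<int>" "v = minkowski x"
    using assms(1) unfolding root_lattice_def by blast
  obtain x' where x': "x' \<in> \<int> \<times> \<int> \<times> \<int>" "v' = minkowski x'"
    using assms(2) unfolding root_lattice_def by blast
  have "x + x' \<in> \<int> \<times> \<int> \<times> \<int>"
    using x(1) x'(1) by (auto simp: mem_Times_iff)
  then show ?thesis
    unfolding root_lattice_def x(2) x'(2) minkowski_add[symmetric] by (rule imageI)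
qed

lemma root_lattice_uminus:
  assumes "v \<in> root_lattice"
  shows "- v \<in> root_lattice"
proof -
  obtain x where x: "x \<in> \<int> \<times> \<int> \<times> \<int>" "v = minkowski x"
    using assms unfolding root_lattice_def by blast
  have "- x \<in> \<int> \<times> \<int> \<times> \<int>"
    using x(1) by (auto simp: mem_Times_iff)
  then show ?thesis
    unfolding root_lattice_def x(2) minkowski_uminus[symmetric] by (rule imageI)
qed

lemma root_lattice_diff: "v \<in> root_lattice \<Longrightarrow> v' \<in> root_lattice \<Longrightarrow> v - v' \<in> root_lattice"
  using root_lattice_add root_lattice_uminus by (metis diff_conv_add_uminus)

text \<open>Multiplication by the unit \<open>\<theta>\<close> (\<open>\<theta>\<^sup>3 = m \<theta>\<^sup>2 - n \<theta> + 1\<close>) and by \<open>\<theta>\<^sup>-\<^sup>1 = \<theta>\<^sup>2 - m \<theta> + n\<close>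
  in the basis \<open>1, \<theta>, \<theta>\<^sup>2\<close>.\<close>

lemma minkowski_mult_root:
  "minkowski (z, x - z * of_int n, y + z * of_int m) = (c * fst (minkowski (x, y, z)), \<alpha> * snd (minkowski (x, y, z)))"
proof -
  have "c * (x + y * c + z * c\<^sup>2) = x * c + y * c\<^sup>2 + z * c ^ 3"
    "\<alpha> * (of_real x + of_real y * \<alpha> + of_real z * \<alpha>\<^sup>2) = of_real x * \<alpha> + of_real y * \<alpha>\<^sup>2 + of_real z * \<alpha> ^ 3"
    by (simp_all add: algebra_simps power2_eq_square power3_eq_cube)
  then show ?thesis
    unfolding minkowski_def c_root \<alpha>_root by (simp add: algebra_simps)
qed

lemma minkowski_mult_root_inverse:
  "minkowski (y + x * of_int n, z - x * of_int m, x)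
     = (inverse c * fst (minkowski (x, y, z)), inverse \<alpha> * snd (minkowski (x, y, z)))"
proof -
  have "minkowski (x, y, z) = (c * fst (minkowski (y + x * of_int n, z - x * of_int m, x)),
      \<alpha> * snd (minkowski (y + x * of_int n, z - x * of_int m, x)))"
    using minkowski_mult_root[where x = "y + x * of_int n" and y = "z - x * of_int m" and z = x] by simp
  moreover have "\<alpha> \<noteq> 0"
    using Im_\<alpha> by auto
  ultimately show ?thesis
    using c_pos by (simp add: prod_eq_iff field_simps)
qed

lemma root_lattice_mult_root:
  assumes "v \<in> root_lattice"
  shows "(c * fst v, \<alpha> * snd v) \<in> root_lattice" "(inverse c * fst v, inverse \<alpha> * snd v) \<in> root_lattice"
proof -
  obtain x where x: "x \<in> \<int> \<times> \<int> \<times> \<int>" "v = minkowski x"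
    using assms unfolding root_lattice_def by blast
  obtain a1 a2 a3 where a: "x = (a1, a2, a3)"
    by (metis prod.collapse)
  have "(a3, a1 - a3 * of_int n, a2 + a3 * of_int m) \<in> \<int> \<times> \<int> \<times> \<int>"
    "(a2 + a1 * of_int n, a3 - a1 * of_int m, a1) \<in> \<int> \<times> \<int> \<times> \<int>"
    using x(1) unfolding a by auto
  moreover have "(c * fst v, \<alpha> * snd v) = minkowski (a3, a1 - a3 * of_int n, a2 + a3 * of_int m)"
    "(inverse c * fst v, inverse \<alpha> * snd v) = minkowski (a2 + a1 * of_int n, a3 - a1 * of_int m, a1)"
    unfolding x(2) a minkowski_mult_root minkowski_mult_root_inverse by simp_all
  ultimately show "(c * fst v, \<alpha> * snd v) \<in> root_lattice" "(inverse c * fst v, inverse \<alpha> * snd v) \<in> root_lattice"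
    unfolding root_lattice_def by simp_all
qed

lemma root_lattice_mult_power:
  assumes "v \<in> root_lattice"
  shows "(c ^ k * fst v, \<alpha> ^ k * snd v) \<in> root_lattice"
    and "(inverse c ^ k * fst v, inverse \<alpha> ^ k * snd v) \<in> root_lattice"
  using assms
proof (induction k arbitrary: v)
  case (Suc k)
  case 1
  from Suc.IH(1)[OF root_lattice_mult_root(1)[OF \<open>v \<in> root_lattice\<close>]]
  show ?case
    by (simp add: mult_ac)
next
  case (Suc k)
  case 2
  from Suc.IH(2)[OF root_lattice_mult_root(2)[OF \<open>v \<in> root_lattice\<close>]]
  show ?case
    by (simp add: mult_ac)
qed simp_all

lemma root_lattice_mult_ad_exp:
  assumes "v \<in> root_lattice"
  shows "(exp (of_int j * ln c) * fst v, ad_exp b (of_int j * ln c) * snd v) \<in> root_lattice"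
proof -
  have "exp (of_int j * ln c) = c powi j"
    using c_pos by (simp add: exp_power_int[symmetric])
  moreover have "ad_exp b (of_int j * ln c) = \<alpha> powi j"
    by (simp add: ad_exp_of_int_mult ad_exp_ln)
  ultimately show ?thesis
    using root_lattice_mult_power[OF assms] by (cases "j \<ge> 0") (simp_all add: power_int_def)
qed

definition Gamma_lat :: "Gelem set" where
  "Gamma_lat = {(of_int j * ln c, v) | j v. v \<in> root_lattice}"

lemma ln_c_nonzero: "ln c \<noteq> 0"
  using c_pos c_ne_1 by simp

lemma G_subgroup_Gamma_lat: "G_subgroup b Gamma_lat"
  unfolding G_subgroup_def
proof (intro conjI ballI)
  show "G_one \<in> Gamma_lat"
    using root_lattice_zero unfolding Gamma_lat_def G_one_def zero_prod_def by force
next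
  fix g g' assume "g \<in> Gamma_lat" "g' \<in> Gamma_lat"
  then obtain j v j' v' where v: "v \<in> root_lattice" "g = (of_int j * ln c, v)"
    and v': "v' \<in> root_lattice" "g' = (of_int j' * ln c, v')"
    unfolding Gamma_lat_def by blast
  have "v + (exp (of_int j * ln c) * fst v', ad_exp b (of_int j * ln c) * snd v') \<in> root_lattice"
    using root_lattice_add[OF v(1) root_lattice_mult_ad_exp[OF v'(1)]] .
  moreover have "G_mult b g g'
      = (of_int (j + j') * ln c, v + (exp (of_int j * ln c) * fst v', ad_exp b (of_int j * ln c) * snd v'))"
    unfolding v(2) v'(2) by (cases v; cases v') (simp add: algebra_simps)
  ultimately show "G_mult b g g' \<in> Gamma_lat"
    unfolding Gamma_lat_def by blast
next
  fix g assume "g \<in> Gamma_lat"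
  then obtain j v where v: "v \<in> root_lattice" "g = (of_int j * ln c, v)"
    unfolding Gamma_lat_def by blast
  have "- (exp (of_int (- j) * ln c) * fst v, ad_exp b (of_int (- j) * ln c) * snd v) \<in> root_lattice"
    using root_lattice_uminus[OF root_lattice_mult_ad_exp[OF v(1)]] .
  moreover have "G_inv b g
      = (of_int (- j) * ln c, - (exp (of_int (- j) * ln c) * fst v, ad_exp b (of_int (- j) * ln c) * snd v))"
    unfolding v(2) by (cases v) simp
  ultimately show "G_inv b g \<in> Gamma_lat"
    unfolding Gamma_lat_def by blast
qed

lemma minkowski_eq_0_iff: "minkowski x = 0 \<longleftrightarrow> x = 0"
proof
  assume "minkowski x = 0"
  obtain a1 a2 a3 where x: "x = (a1, a2, a3)"
    by (metis prod.collapse)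
  have real: "a1 + a2 * c + a3 * c\<^sup>2 = 0"
    and complex: "of_real a1 + of_real a2 * \<alpha> + of_real a3 * \<alpha>\<^sup>2 = (0::complex)"
    using \<open>minkowski x = 0\<close> unfolding minkowski_def x by (simp_all add: zero_prod_def)
  define p q where "p = Re \<alpha>" and "q = Im \<alpha>"
  have "q \<noteq> 0"
    using Im_\<alpha> q_def by simp
  have "q * (a2 + 2 * a3 * p) = 0"
    using arg_cong[OF complex, of Im] unfolding p_def q_def by (simp add: power2_eq_square algebra_simps)
  then have a2: "a2 = - 2 * a3 * p"
    using \<open>q \<noteq> 0\<close> by simp
  have "a1 + a2 * p + a3 * (p\<^sup>2 - q\<^sup>2) = 0"
    using arg_cong[OF complex, of Re] unfolding p_def q_def by (simp add: power2_eq_square algebra_simps)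
  then have "a3 * ((p - c)\<^sup>2 + q\<^sup>2) = 0"
    using real unfolding a2 by (simp add: algebra_simps power2_eq_square)
  moreover have "(p - c)\<^sup>2 + q\<^sup>2 > 0"
    using \<open>q \<noteq> 0\<close> by (simp add: add_nonneg_pos)
  ultimately have "a3 = 0"
    using \<open>q \<noteq> 0\<close> by simp
  then show "x = 0"
    using x a2 real by (simp add: zero_prod_def)
qed (simp add: minkowski_def zero_prod_def)

lemma inj_minkowski: "inj minkowski"
  using linear_minkowski minkowski_eq_0_iff by (simp add: linear_injective_0)

lemma root_lattice_separated:
  obtains B where "B > 0" "\<And>v. v \<in> root_lattice \<Longrightarrow> v \<noteq> 0 \<Longrightarrow> B \<le> norm v"
proof -
  obtain B where B: "B > 0" "\<And>x. B * norm x \<le> norm (minkowski x)"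
    using linear_inj_bounded_below_pos[OF linear_minkowski inj_minkowski] by blast
  have "B \<le> norm v" if v: "v \<in> root_lattice" "v \<noteq> 0" for v
  proof -
    obtain x where x: "x \<in> \<int> \<times> \<int> \<times> \<int>" "v = minkowski x"
      using v(1) unfolding root_lattice_def by blast
    obtain a1 a2 a3 where a: "x = (a1, a2, a3)"
      by (metis prod.collapse)
    have "x \<noteq> 0"
      using v(2) unfolding x(2) minkowski_eq_0_iff .
    then have "\<bar>a1\<bar> \<ge> 1 \<or> \<bar>a2\<bar> \<ge> 1 \<or> \<bar>a3\<bar> \<ge> 1"
      using x(1) Ints_nonzero_abs_ge1 unfolding a by (auto simp: zero_prod_def)
    then have "1 \<le> norm x"
      using norm_le_norm_triple[where a = a1 and b = a2 and c = a3] unfolding a by force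
    then have "B \<le> B * norm x"
      using B(1) by simp
    also have "\<dots> \<le> norm v"
      using B(2) x(2) by simp
    finally show ?thesis .
  qed
  then show ?thesis
    using that B(1) by blast
qed

lemma discrete_Gamma_lat: "discrete Gamma_lat"
proof -
  obtain B where B: "B > 0" and root_lattice_norm: "\<And>v. v \<in> root_lattice \<Longrightarrow> v \<noteq> 0 \<Longrightarrow> B \<le> norm v"
    using root_lattice_separated by blast
  define e where "e = min \<bar>ln c\<bar> B"
  have "e > 0"
    unfolding e_def using B ln_c_nonzero by simp
  have "uniform_discrete Gamma_lat"
  proof (rule uniformI1[OF \<open>e > 0\<close>])
    fix g g' assume g: "g \<in> Gamma_lat" "g' \<in> Gamma_lat" "dist g g' < e"
    obtain j v where v: "v \<in> root_lattice" "g = (of_int j * ln c, v)"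
      using g(1) unfolding Gamma_lat_def by blast
    obtain j' v' where v': "v' \<in> root_lattice" "g' = (of_int j' * ln c, v')"
      using g(2) unfolding Gamma_lat_def by blast
    have dist: "norm (of_int (j - j') * ln c, v - v') < e"
      using g(3) unfolding v(2) v'(2) dist_norm by (simp add: algebra_simps)
    then have "\<bar>of_int (j - j')\<bar> * \<bar>ln c\<bar> < 1 * \<bar>ln c\<bar>"
      using norm_fst_le[of "of_int (j - j') * ln c" "v - v'"] unfolding e_def by (simp add: abs_mult)
    then have "\<bar>of_int (j - j')\<bar> < (1::real)"
      using ln_c_nonzero by (simp only: mult_less_cancel_right)
    then have "j = j'"
      by linarith
    moreover have "norm (v - v') < B"
      using dist norm_snd_le[of "v - v'" "of_int (j - j') * ln c"] unfolding e_def by simp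
    then have "v = v'"
      using root_lattice_norm[OF root_lattice_diff[OF v(1) v'(1)]] by force
    ultimately show "g = g'"
      using v(2) v'(2) by simp
  qed
  then show ?thesis
    by (rule uniform_discrete_imp_discrete)
qed

lemma surj_minkowski: "surj minkowski"
proof -
  have "linear (real_coords \<circ> minkowski)"
    using linear_real_coords linear_minkowski by (rule linear_compose[rotated])
  moreover have "inj (real_coords \<circ> minkowski)"
    using inj_real_coords inj_minkowski by (rule inj_compose)
  ultimately have surj: "surj (real_coords \<circ> minkowski)"
    using linear_injective_imp_surjective by blast
  show ?thesis
    unfolding surj_def
  proof
    fix w
    obtain r where "(real_coords \<circ> minkowski) r = real_coords w"
      using surj by (metis surjD)
    then have "minkowski r = w"
      using inj_real_coords by (simp add: inj_eq)
    then show "\<exists>r. w = minkowski r"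
      by blast
  qed
qed

text \<open>A compact set meeting every right coset: translate the \<open>\<real>\<close>-coordinate into
  \<open>[-\<bar>ln c\<bar>, \<bar>ln c\<bar>]\<close> by a power of \<open>(ln c, 0)\<close>, then reduce the normal coordinates modulo
  \<open>root_lattice\<close> into the image of the unit cube.\<close>

definition fundamental_set :: "Gelem set" where
  "fundamental_set = (\<lambda>p. (fst p, minkowski (snd p))) ` ({-\<bar>ln c\<bar>..\<bar>ln c\<bar>} \<times> ({0..1} \<times> {0..1} \<times> {0..1}))"

lemma compact_fundamental_set: "compact fundamental_set"
  unfolding fundamental_set_def minkowski_def
  by (intro compact_continuous_image compact_Times compact_Icc continuous_intros)

lemma fundamental_set_cover: "\<exists>\<gamma>\<in>Gamma_lat. G_mult b \<gamma> g \<in> fundamental_set"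
proof -
  obtain s v where g: "g = (s, v)"
    by (metis prod.collapse)
  define j where "j = - \<lfloor>s / ln c\<rfloor>"
  define s' where "s' = of_int j * ln c + s"
  have "s' = ln c * frac (s / ln c)"
    unfolding s'_def j_def frac_def using ln_c_nonzero by (simp add: field_simps)
  then have "\<bar>s'\<bar> \<le> \<bar>ln c\<bar>"
    using mult_left_le[OF less_imp_le[OF frac_lt_1[of "s / ln c"]] abs_ge_zero[of "ln c"]]
    by (simp add: abs_mult frac_ge_0)
  obtain r where r: "minkowski r = (exp (of_int j * ln c) * fst v, ad_exp b (of_int j * ln c) * snd v)"
    using surj_minkowski by (metis surjD)
  obtain r1 r2 r3 where rr: "r = (r1, r2, r3)"
    by (metis prod.collapse)
  define q :: R3 where "q = (- of_int \<lfloor>r1\<rfloor>, - of_int \<lfloor>r2\<rfloor>, - of_int \<lfloor>r3\<rfloor>)"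
  have "(of_int j * ln c, 0) \<in> Gamma_lat" "(of_int 0 * ln c, minkowski q) \<in> Gamma_lat"
    unfolding Gamma_lat_def root_lattice_def q_def using root_lattice_zero[unfolded root_lattice_def] by force+
  then have \<gamma>: "G_mult b (of_int 0 * ln c, minkowski q) (of_int j * ln c, 0) \<in> Gamma_lat"
    using G_subgroup_Gamma_lat G_subgroup_mult by blast
  have "G_mult b (G_mult b (of_int 0 * ln c, minkowski q) (of_int j * ln c, 0)) g = (s', minkowski (q + r))"
    unfolding G_mult_assoc g s'_def minkowski_add r
    by (cases v; cases "minkowski q") (simp add: zero_prod_def)
  moreover have "q + r = (frac r1, frac r2, frac r3)"
    unfolding q_def rr frac_def by simp
  then have "q + r \<in> {0..1} \<times> {0..1} \<times> {0..1}"
    by (simp add: frac_ge_0 less_imp_le[OF frac_lt_1])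
  then have "(s', minkowski (q + r)) \<in> fundamental_set"
    unfolding fundamental_set_def using \<open>\<bar>s'\<bar> \<le> \<bar>ln c\<bar>\<close> by (intro image_eqI[of _ _ "(s', q + r)"]) auto
  ultimately show ?thesis
    using \<gamma> by metis
qed

lemma G_lattice_Gamma_lat: "G_lattice b Gamma_lat"
  using G_lattice_of_compact_cover[OF G_subgroup_Gamma_lat discrete_Gamma_lat compact_fundamental_set]
    fundamental_set_cover by blast

end

lemma in_h_image_imp_G_lattice:
  assumes "b \<in> (\<Union>k. h k ` Sigma')"
  shows "\<exists>\<Gamma>. G_lattice b \<Gamma>"
proof -
  obtain k m n where mn: "(m, n) \<in> Sigma'" "b = h k (m, n)"
    using assms by auto
  obtain c \<alpha> where f: "\<And>z. fmn m n z = (z - of_real c) * (z - \<alpha>) * (z - cnj \<alpha>)"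
    and \<alpha>: "Im \<alpha> > 0" and c: "c > 0" "c \<noteq> 1" "c * (cmod \<alpha>)\<^sup>2 = 1"
    using Sigma'_roots[OF mn(1)] by blast
  have "(exp (- ln c / 2))\<^sup>2 = exp (- ln c)"
    by (simp add: power2_eq_square flip: exp_add)
  also have "\<dots> = (cmod \<alpha>)\<^sup>2"
    using c(1,3) by (simp add: exp_minus field_simps)
  finally have norm_\<alpha>: "cmod \<alpha> = exp (- ln c / 2)"
    by (simp add: power2_eq_iff_nonneg)
  have "\<And>z. fmn m n z = (z - of_real (exp (ln c))) * (z - \<alpha>) * (z - cnj \<alpha>)"
    using f c(1) by simp
  then have "ln c * b = Arg \<alpha> + 2 * of_int k * pi"
    using h_eq_iff[of m n "ln c" \<alpha> k b] \<alpha> c mn(2) by simp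
  then have "ad_exp b (ln c) = \<alpha>"
    using ad_exp_eq_iff[OF norm_\<alpha>] by blast
  moreover have "complex_of_real (c ^ 3 - of_int m * c\<^sup>2 + of_int n * c - 1) = 0"
    using f[of "of_real c"] unfolding fmn_def by simp
  then have "c ^ 3 - of_int m * c\<^sup>2 + of_int n * c - 1 = 0"
    by (simp only: of_real_eq_0_iff)
  then have "c ^ 3 = of_int m * c\<^sup>2 - of_int n * c + 1"
    by linarith
  moreover have "\<alpha> ^ 3 = of_int m * \<alpha>\<^sup>2 - of_int n * \<alpha> + 1"
    using f[of \<alpha>] unfolding fmn_def by (simp add: algebra_simps)
  ultimately interpret lattice_construction b c \<alpha> m n
    using c \<alpha> by unfold_locales
  show ?thesis
    using G_lattice_Gamma_lat by blast
qed

theorem theorem3p9: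
  fixes b :: real
  shows "((\<exists>\<Gamma>. G_lattice b \<Gamma>) \<longleftrightarrow> b \<in> (\<Union>k::int. h k ` Sigma'))
         \<and> countable (\<Union>k::int. h k ` Sigma')"
proof
  show "(\<exists>\<Gamma>. G_lattice b \<Gamma>) \<longleftrightarrow> b \<in> (\<Union>k::int. h k ` Sigma')"
    using G_lattice_imp_in_h_image in_h_image_imp_G_lattice by blast
  show "countable (\<Union>k::int. h k ` Sigma')"
    by (intro countable_UN countable_image) simp_all
qed

end
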